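(* Let $n\ge1$ and $k\ge2$ even, and $\alpha_{nk}=(0\,1\,\cdots\,nk)$. (1) For every $\pi\in\Pi_{n,k}$, $\mathrm{cyc}_0(\pi\alpha_{nk})\le nk/2$, with equality if and only if the pairing $\bar\pi$ of the blocks $\bar1,\dots,\bar k$ induced by $\pi$ is a non-crossing pair partition of $\{1,\dots,k\}$ and, whenever blocks $\bar j,\bar l$ with $j<l$ are paired by $\bar\pi$, $\pi((j-1)n+r)=ln+1-r$ for all $1\le r\le n$. (2) $\lim_{N\to\infty}K_{k,n,N}=C_{k/2}$, where $C_p=\frac1{p+1}\binom{2p}{p}$ is the $p$-th Catalan number.
   Context: Pair partitions are identified with fixed-point-free involutions, extended to fix $0$; $\mathrm{cyc}_0$ counts cycles not containing $0$. The set $[nk]=\{1,\dots,nk\}$ is cut into $k$ blocks $\bar j=\{(j-1)n+1,\dots,jn\}$. $\mathcal P_2(n,\dots,n)$ is the set of pair partitions of $[nk]$ in which every pair joins two different blocks; $\Pi_{n,k}$ is the set of $\pi\in\mathcal P_2(n,\dots,n)$ such that whenever $i_1,i_2$ are in the same block, $\pi(i_1),\pi(i_2)$ are in the same block (so $\pi$ induces a pairing $\bar\pi$ of the $k$ blocks). $K_{k,n,N}=\sum_{\pi\in\Pi_{n,k}}N^{-(nk/2-\mathrm{cyc}_0(\pi\alpha_{nk}))}$. *)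

theory Defs
  imports "HOL-Analysis.Analysis"
begin

text \<open>Pair partitions of [m] = {1..m}, identified with fixed-point-free involutions
  of {1..m}, extended by the identity outside {1..m} (in particular fixing 0).\<close>
definition pair_partition :: "nat \<Rightarrow> (nat \<Rightarrow> nat) \<Rightarrow> bool" where
  "pair_partition m \<pi> \<longleftrightarrow>
     (\<forall>i\<in>{1..m}. \<pi> i \<in> {1..m} \<and> \<pi> i \<noteq> i \<and> \<pi> (\<pi> i) = i) \<and>
     (\<forall>i. i \<notin> {1..m} \<longrightarrow> \<pi> i = i)"

text \<open>Index of the block containing i (blocks of size n): block j = {(j-1)n+1..jn}.\<close>
definition blk :: "nat \<Rightarrow> nat \<Rightarrow> nat" where
  "blk n i = (i - 1) div n + 1"

definition P2 :: "nat \<Rightarrow> nat \<Rightarrow> (nat \<Rightarrow> nat) set" where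
  "P2 n k = {\<pi>. pair_partition (n*k) \<pi> \<and> (\<forall>i\<in>{1..n*k}. blk n (\<pi> i) \<noteq> blk n i)}"

definition PiNK :: "nat \<Rightarrow> nat \<Rightarrow> (nat \<Rightarrow> nat) set" where
  "PiNK n k = {\<pi> \<in> P2 n k. \<forall>i1\<in>{1..n*k}. \<forall>i2\<in>{1..n*k}.
        blk n i1 = blk n i2 \<longrightarrow> blk n (\<pi> i1) = blk n (\<pi> i2)}"

definition bar_pi :: "nat \<Rightarrow> (nat \<Rightarrow> nat) \<Rightarrow> nat \<Rightarrow> nat" where
  "bar_pi n \<pi> j = blk n (\<pi> ((j - 1) * n + 1))"

definition noncrossing :: "nat \<Rightarrow> (nat \<Rightarrow> nat) \<Rightarrow> bool" where
  "noncrossing k p \<longleftrightarrow>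
     (\<forall>a b c d. 1 \<le> a \<and> a < b \<and> b < c \<and> c < d \<and> d \<le> k \<longrightarrow>
        \<not> (p a = c \<and> p b = d))"

definition alpha :: "nat \<Rightarrow> nat \<Rightarrow> nat" where
  "alpha m i = (if i < m then i + 1 else if i = m then 0 else i)"

definition cyc_of :: "(nat \<Rightarrow> nat) \<Rightarrow> nat \<Rightarrow> nat set" where
  "cyc_of \<sigma> x = range (\<lambda>j. (\<sigma> ^^ j) x)"

definition cyc0 :: "nat \<Rightarrow> (nat \<Rightarrow> nat) \<Rightarrow> nat" where
  "cyc0 m \<sigma> = card {cyc_of \<sigma> x | x. x \<in> {0..m} \<and> 0 \<notin> cyc_of \<sigma> x}"

definition K :: "nat \<Rightarrow> nat \<Rightarrow> real \<Rightarrow> real" where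
  "K k n N = (\<Sum>\<pi>\<in>PiNK n k.
      N powr (- (real (n*k) / 2 - real (cyc0 (n*k) (\<pi> \<circ> alpha (n*k))))))"

definition catalan :: "nat \<Rightarrow> real" where
  "catalan p = real ((2*p) choose p) / real (p + 1)"

end

(* If pi pairs some point a with
   its successor, then a is a fixed point of pi o alpha, and deleting the pair {a, alpha a}
   removes exactly this cycle without changing whether pi is noncrossing. If pi pairs no two
   neighbours, then pi o alpha has no fixed point, hence at most (m + 1)/2 cycles, and pi is
   crossing, since an innermost chord of a noncrossing pairing joins neighbours. Induction on m
   gives cyc0 (pi alpha) <= m/2, with equality iff pi is noncrossing.

   For pi in Pi_{n,k} paired blocks are joined by n parallel chords, which must be nested when
   pi is noncrossing: so pi is noncrossing iff the block pairing is noncrossing and pi reverses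
   the order between paired blocks. Such pi correspond to the noncrossing pairings of the k
   blocks, which are counted by the Catalan number C_{k/2} through the decomposition by the
   partner of the first point. Every term of K_{k,n,N} is a nonpositive power of N, so it tends
   to 1 for noncrossing pi and to 0 otherwise. *)

theory Submission
  imports Defs "HOL-Combinatorics.Orbits" "HOL-Computational_Algebra.Formal_Power_Series"
begin

section \<open>Successor cycles and cycle counting\<close>

definition next_in :: "nat set \<Rightarrow> nat \<Rightarrow> nat" where
  "next_in S x = (if \<exists>y\<in>S. x < y then Min {y\<in>S. x < y} else 0)"

text \<open>\<open>alpha m = succ_cycle {0..m}\<close>; arbitrary finite \<open>S \<ni> 0\<close> are needed because the induction below
  deletes points.\<close>
definition succ_cycle :: "nat set \<Rightarrow> nat \<Rightarrow> nat" where
  "succ_cycle S x = (if x \<in> S then next_in S x else x)"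

lemma next_in_greater:
  assumes "finite S" "y \<in> S" "x < y"
  shows "x < next_in S x" "next_in S x \<le> y" "next_in S x \<in> S"
proof -
  have fin: "finite {y\<in>S. x < y}" and y: "y \<in> {y\<in>S. x < y}" using assms by auto
  then have "Min {y\<in>S. x < y} \<in> {y\<in>S. x < y}" "Min {y\<in>S. x < y} \<le> y"
    using Min_in[OF fin] Min_le[OF fin y] by blast+
  then show "x < next_in S x" "next_in S x \<le> y" "next_in S x \<in> S"
    using assms by (auto simp: next_in_def)
qed

lemma next_in_max: "\<not> (\<exists>y\<in>S. x < y) \<Longrightarrow> next_in S x = 0"
  by (simp add: next_in_def)

lemma next_in_mem: "finite S \<Longrightarrow> 0 \<in> S \<Longrightarrow> next_in S x \<in> S"
  using next_in_greater(3) next_in_max by metis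

lemma next_in_eqI:
  assumes "finite S" "z \<in> S" "x < z" "\<And>y. y \<in> S \<Longrightarrow> x < y \<Longrightarrow> z \<le> y"
  shows "next_in S x = z"
  using next_in_greater[OF assms(1-3)] assms(4)[of "next_in S x"] by simp

lemma next_in_Diff:
  assumes "finite S" "next_in S z \<notin> D"
  shows "next_in (S - D) z = next_in S z"
proof (cases "\<exists>y\<in>S. z < y")
  case True
  then show ?thesis using assms next_in_greater[OF assms(1)] by (intro next_in_eqI) auto
next
  case False
  then show ?thesis by (simp add: next_in_max)
qed

lemma inj_on_next_in:
  assumes "finite S" "0 \<in> S"
  shows "inj_on (next_in S) S"
proof -
  have "next_in S u \<noteq> next_in S v" if "u < v" "v \<in> S" for u v
  proof (cases "\<exists>y\<in>S. v < y")
    case True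
    then show ?thesis using next_in_greater[OF assms(1)] that by (metis leD le_less_trans)
  next
    case False
    then show ?thesis using next_in_max next_in_greater(1)[OF assms(1)] that by fastforce
  qed
  then show ?thesis by (metis inj_onI linorder_neqE_nat)
qed

lemma succ_cycle_permutes:
  assumes "finite S" "0 \<in> S"
  shows "succ_cycle S permutes S"
proof -
  have "next_in S ` S = S"
    using endo_inj_surj[OF assms(1) _ inj_on_next_in[OF assms]] next_in_mem[OF assms] by blast
  then have "bij_betw (next_in S) S S" using inj_on_next_in[OF assms] by (simp add: bij_betw_def)
  then have "bij_betw (succ_cycle S) S S"
    by (rule bij_betw_cong[THEN iffD1, rotated]) (simp add: succ_cycle_def)
  then show ?thesis by (rule bij_imp_permutes) (simp add: succ_cycle_def)
qed

definition pairing_on :: "nat set \<Rightarrow> (nat \<Rightarrow> nat) \<Rightarrow> bool" where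
  "pairing_on S \<pi> \<longleftrightarrow>
     (\<forall>i\<in>S-{0}. \<pi> i \<in> S-{0} \<and> \<pi> i \<noteq> i \<and> \<pi> (\<pi> i) = i) \<and> (\<forall>i. i \<notin> S-{0} \<longrightarrow> \<pi> i = i)"

definition noncrossing_on :: "nat set \<Rightarrow> (nat \<Rightarrow> nat) \<Rightarrow> bool" where
  "noncrossing_on S \<pi> \<longleftrightarrow>
     (\<forall>a b c d. 0 < a \<and> a < b \<and> b < c \<and> c < d \<and> a \<in> S \<and> b \<in> S \<and> c \<in> S \<and> d \<in> S \<longrightarrow>
        \<not> (\<pi> a = c \<and> \<pi> b = d))"

lemma noncrossing_onI:
  assumes "\<And>a b c d. 0 < a \<Longrightarrow> a < b \<Longrightarrow> b < c \<Longrightarrow> c < d \<Longrightarrow>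
    a \<in> S \<Longrightarrow> b \<in> S \<Longrightarrow> c \<in> S \<Longrightarrow> d \<in> S \<Longrightarrow> \<pi> a = c \<Longrightarrow> \<pi> b = d \<Longrightarrow> False"
  shows "noncrossing_on S \<pi>"
  using assms unfolding noncrossing_on_def by blast

lemma noncrossing_onD:
  assumes "noncrossing_on S \<pi>" "0 < a" "a < b" "b < c" "c < d" "a \<in> S" "b \<in> S" "c \<in> S" "d \<in> S"
    and "\<pi> a = c" "\<pi> b = d"
  shows False
  using assms unfolding noncrossing_on_def by blast

definition ncycles0 :: "(nat \<Rightarrow> nat) \<Rightarrow> nat set \<Rightarrow> nat" where
  "ncycles0 \<sigma> T = card {orbit \<sigma> x | x. x \<in> T \<and> 0 \<notin> orbit \<sigma> x}"

lemma pairing_on_involution: "pairing_on S \<pi> \<Longrightarrow> \<pi> (\<pi> x) = x"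
  unfolding pairing_on_def by (cases "x \<in> S - {0}") auto

lemma pairing_on_permutes:
  assumes "pairing_on S \<pi>"
  shows "\<pi> permutes S"
proof (rule bij_imp_permutes)
  show "bij_betw \<pi> S S"
    using assms pairing_on_involution[OF assms] by (intro bij_betwI[where g=\<pi>]) (auto simp: pairing_on_def)
  show "\<pi> x = x" if "x \<notin> S" for x using assms that by (auto simp: pairing_on_def)
qed

lemma pairing_comp_succ_cycle_permutes:
  "finite S \<Longrightarrow> 0 \<in> S \<Longrightarrow> pairing_on S \<pi> \<Longrightarrow> (\<pi> \<circ> succ_cycle S) permutes S"
  by (intro permutes_compose succ_cycle_permutes pairing_on_permutes)

lemma permutation_pairing_comp_succ_cycle:
  "finite S \<Longrightarrow> 0 \<in> S \<Longrightarrow> pairing_on S \<pi> \<Longrightarrow> permutation (\<pi> \<circ> succ_cycle S)"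
  using pairing_comp_succ_cycle_permutes permutation_permutes by blast

lemma orbit_subset_closed:
  assumes "permutation f" "x \<in> E" "\<And>y. y \<in> E \<Longrightarrow> f y \<in> E"
  shows "orbit f x \<subseteq> E"
proof
  fix z assume "z \<in> orbit f x"
  then show "z \<in> E" by induct (use assms in auto)
qed

lemma orbit_eq_if_mem: "permutation f \<Longrightarrow> y \<in> orbit f x \<Longrightarrow> orbit f y = orbit f x"
  by (rule orbit_cyclic_eq3[OF cyclic_on_orbit'])

lemma not_in_orbit_of_fixpoint:
  "permutation f \<Longrightarrow> f b = b \<Longrightarrow> x \<noteq> b \<Longrightarrow> b \<notin> orbit f x"
  by (metis orbit_eq_if_mem orbit_eq_singleton_iff permutation_self_in_orbit singletonD)

lemma orbit_splice:
  assumes perm: "permutation \<tau>" and fix_b: "\<tau> b = b" and "b \<noteq> c"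
  defines "\<tau>' \<equiv> \<tau>(c := b, b := \<tau> c)"
  shows "x \<noteq> b \<Longrightarrow> orbit \<tau>' x = (if c \<in> orbit \<tau> x then insert b (orbit \<tau> x) else orbit \<tau> x)"
    and "orbit \<tau>' b = insert b (orbit \<tau> c)"
proof -
  have "\<tau>' = \<tau> \<circ> Transposition.transpose b c"
    using fix_b \<open>b \<noteq> c\<close> by (auto simp: \<tau>'_def Transposition.transpose_def)
  then have perm': "permutation \<tau>'"
    using perm by (simp add: permutation_compose permutation_swap_id)
  show splice: "orbit \<tau>' x = (if c \<in> orbit \<tau> x then insert b (orbit \<tau> x) else orbit \<tau> x)"
    if "x \<noteq> b" for x
  proof (rule subset_antisym)
    have "b \<notin> orbit \<tau> x" using not_in_orbit_of_fixpoint[OF perm fix_b that] .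
    then show "orbit \<tau>' x \<subseteq> (if c \<in> orbit \<tau> x then insert b (orbit \<tau> x) else orbit \<tau> x)"
      using orbit.step[of _ \<tau> x]
      by (intro orbit_subset_closed[OF perm'])
        (auto simp: \<tau>'_def permutation_self_in_orbit[OF perm] split: if_splits)
    have "\<tau> y \<in> orbit \<tau>' x" if "y \<in> orbit \<tau>' x" for y
      using that orbit.step[OF that] orbit.step[OF orbit.step[OF that]] fix_b \<open>b \<noteq> c\<close>
      by (cases "y = c"; cases "y = b") (auto simp: \<tau>'_def)
    then have "orbit \<tau> x \<subseteq> orbit \<tau>' x"
      by (intro orbit_subset_closed[OF perm] permutation_self_in_orbit[OF perm'])
    moreover have "b \<in> orbit \<tau>' x" if "c \<in> orbit \<tau>' x"
      using orbit.step[OF that] \<open>b \<noteq> c\<close> by (simp add: \<tau>'_def)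
    ultimately show "(if c \<in> orbit \<tau> x then insert b (orbit \<tau> x) else orbit \<tau> x) \<subseteq> orbit \<tau>' x"
      by auto
  qed
  have "\<tau> c \<noteq> b"
    using fix_b \<open>b \<noteq> c\<close> perm by (metis permutation_permutes permutes_inj injD)
  have "orbit \<tau>' b = orbit \<tau>' (\<tau> c)"
    using permutation_orbit_step[OF perm', of b] \<open>b \<noteq> c\<close> by (simp add: \<tau>'_def)
  also have "\<dots> = insert b (orbit \<tau> (\<tau> c))"
    using splice[OF \<open>\<tau> c \<noteq> b\<close>] permutation_orbit_step[OF perm, of c]
      permutation_self_in_orbit[OF perm, of c] by simp
  also have "\<dots> = insert b (orbit \<tau> c)"
    using permutation_orbit_step[OF perm] by metis
  finally show "orbit \<tau>' b = insert b (orbit \<tau> c)" .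
qed

lemma ncycles0_splice:
  assumes perm: "permutation \<tau>" and fix_b: "\<tau> b = b" and "b \<noteq> c" "b \<noteq> 0" "c \<in> T"
  shows "ncycles0 (\<tau>(c := b, b := \<tau> c)) T = ncycles0 \<tau> (T - {b})"
proof -
  let ?\<tau>' = "\<tau>(c := b, b := \<tau> c)"
  define F where "F Q = (if c \<in> Q then insert b Q else Q)" for Q
  note splice = orbit_splice[OF perm fix_b \<open>b \<noteq> c\<close>]
  have "{orbit ?\<tau>' x | x. x \<in> T \<and> 0 \<notin> orbit ?\<tau>' x} =
        F ` {orbit \<tau> x | x. x \<in> T - {b} \<and> 0 \<notin> orbit \<tau> x}"
  proof (rule set_eqI, rule iffI)
    fix Q assume "Q \<in> {orbit ?\<tau>' x | x. x \<in> T \<and> 0 \<notin> orbit ?\<tau>' x}"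
    then obtain x where x: "x \<in> T" "0 \<notin> orbit ?\<tau>' x" "Q = orbit ?\<tau>' x" by auto
    show "Q \<in> F ` {orbit \<tau> x | x. x \<in> T - {b} \<and> 0 \<notin> orbit \<tau> x}"
    proof (cases "x = b")
      case True
      then have "Q = F (orbit \<tau> c)" "0 \<notin> orbit \<tau> c"
        using x splice(2) permutation_self_in_orbit[OF perm, of c] by (auto simp: F_def)
      then show ?thesis using \<open>c \<in> T\<close> \<open>b \<noteq> c\<close> by blast
    next
      case False
      then have "Q = F (orbit \<tau> x)" "0 \<notin> orbit \<tau> x"
        using x splice(1)[OF False] by (auto simp: F_def split: if_splits)
      then show ?thesis using x False by blast
    qed
  next
    fix Q assume "Q \<in> F ` {orbit \<tau> x | x. x \<in> T - {b} \<and> 0 \<notin> orbit \<tau> x}"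
    then obtain x where x: "x \<in> T" "x \<noteq> b" "0 \<notin> orbit \<tau> x" "Q = F (orbit \<tau> x)" by auto
    then have "Q = orbit ?\<tau>' x" "0 \<notin> orbit ?\<tau>' x"
      using splice(1)[OF x(2)] \<open>b \<noteq> 0\<close> by (auto simp: F_def)
    then show "Q \<in> {orbit ?\<tau>' x | x. x \<in> T \<and> 0 \<notin> orbit ?\<tau>' x}" using x by blast
  qed
  moreover have "inj_on F {orbit \<tau> x | x. x \<in> T - {b} \<and> 0 \<notin> orbit \<tau> x}"
  proof (rule inj_onI)
    fix Q1 Q2 assume Q: "Q1 \<in> {orbit \<tau> x | x. x \<in> T - {b} \<and> 0 \<notin> orbit \<tau> x}"
      "Q2 \<in> {orbit \<tau> x | x. x \<in> T - {b} \<and> 0 \<notin> orbit \<tau> x}" "F Q1 = F Q2"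
    then obtain x1 x2 where "Q1 = orbit \<tau> x1" "x1 \<noteq> b" "Q2 = orbit \<tau> x2" "x2 \<noteq> b" by blast
    then have "b \<notin> Q1" "b \<notin> Q2" using not_in_orbit_of_fixpoint[OF perm fix_b] by auto
    then have "Q1 = F Q1 - {b}" "Q2 = F Q2 - {b}" by (auto simp: F_def)
    then show "Q1 = Q2" using Q(3) by simp
  qed
  ultimately show ?thesis unfolding ncycles0_def by (simp add: card_image)
qed

lemma ncycles0_insert_fixpoint:
  assumes perm: "permutation \<tau>" and "\<tau> a = a" "a \<notin> T" "a \<noteq> 0" "finite T"
  shows "ncycles0 \<tau> (insert a T) = Suc (ncycles0 \<tau> T)"
proof -
  have "orbit \<tau> a = {a}" using \<open>\<tau> a = a\<close> orbit_eq_singleton_iff by metis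
  then have "{orbit \<tau> x | x. x \<in> insert a T \<and> 0 \<notin> orbit \<tau> x} =
      insert {a} {orbit \<tau> x | x. x \<in> T \<and> 0 \<notin> orbit \<tau> x}"
    using \<open>a \<noteq> 0\<close> by auto
  moreover have "{a} \<notin> {orbit \<tau> x | x. x \<in> T \<and> 0 \<notin> orbit \<tau> x}"
    using permutation_self_in_orbit[OF perm] \<open>a \<notin> T\<close> by fastforce
  ultimately show ?thesis using \<open>finite T\<close> by (simp add: ncycles0_def)
qed

context
  fixes S :: "nat set" and \<pi> :: "nat \<Rightarrow> nat" and a b :: nat
  assumes fin: "finite S" and zero_in: "0 \<in> S" and pairing: "pairing_on S \<pi>"
    and a_in: "a \<in> S" and a_nonzero: "a \<noteq> 0" and b_def: "b = next_in S a" and adjacent: "\<pi> a = b"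
begin

lemma adjacent_pair:
  shows "b \<in> S" "b \<noteq> 0" "a < b" "\<pi> b = a" and "\<And>y. y \<in> S \<Longrightarrow> a < y \<Longrightarrow> b \<le> y"
proof -
  show b: "b \<in> S" "b \<noteq> 0" and "\<pi> b = a"
    using pairing a_in a_nonzero adjacent pairing_on_involution[OF pairing, of a]
    by (auto simp: pairing_on_def)
  show "a < b"
    using next_in_greater(1)[OF fin _ _, of _ a] next_in_max[of S a] b
    by (cases "\<exists>y\<in>S. a < y") (auto simp: b_def)
  show "\<And>y. y \<in> S \<Longrightarrow> a < y \<Longrightarrow> b \<le> y"
    using next_in_greater(2)[OF fin] by (simp add: b_def)
qed

lemma pairing_on_remove_adjacent: "pairing_on (S - {a, b}) (\<pi>(a := a, b := b))"
proof -
  have "\<pi> i \<notin> {a, b}" if "i \<in> S - {0}" "i \<notin> {a, b}" for i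
    using that adjacent adjacent_pair(4) pairing_on_involution[OF pairing, of i] by auto
  then show ?thesis using pairing by (auto simp: pairing_on_def)
qed

lemma card_remove_adjacent: "card (S - {a, b}) + 2 = card S"
  using adjacent_pair(1,3) a_in fin card_Diff_subset[of "{a, b}" S] card_mono[of S "{a, b}"] by auto

lemma noncrossing_on_remove_adjacent:
  "noncrossing_on S \<pi> \<longleftrightarrow> noncrossing_on (S - {a, b}) (\<pi>(a := a, b := b))"
proof
  assume nc: "noncrossing_on S \<pi>"
  show "noncrossing_on (S - {a, b}) (\<pi>(a := a, b := b))"
  proof (rule noncrossing_onI)
    fix w x y z assume ord: "0 < w" "w < x" "x < y" "y < z"
      and in_S': "w \<in> S - {a, b}" "x \<in> S - {a, b}" "y \<in> S - {a, b}" "z \<in> S - {a, b}"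
      and cross': "(\<pi>(a := a, b := b)) w = y" "(\<pi>(a := a, b := b)) x = z"
    show False
      by (rule noncrossing_onD[OF nc ord]) (use in_S' cross' in auto)
  qed
next
  assume nc: "noncrossing_on (S - {a, b}) (\<pi>(a := a, b := b))"
  have chord: "u = a \<and> v = b" if "u < v" "\<pi> u = v" "u \<in> {a, b} \<or> v \<in> {a, b}" for u v
  proof -
    have "\<pi> v = u" using that(2) pairing_on_involution[OF pairing, of u] by simp
    then have "u \<in> {a, b} \<and> v \<in> {a, b}"
      using that(2,3) adjacent adjacent_pair(4) by (metis insert_iff singletonD)
    then show ?thesis using that(1) adjacent_pair(3) by auto
  qed
  show "noncrossing_on S \<pi>"
  proof (rule noncrossing_onI)
    fix w x y z assume ord: "0 < w" "w < x" "x < y" "y < z" and in_S: "w \<in> S" "x \<in> S" "y \<in> S" "z \<in> S"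
      and cross: "\<pi> w = y" "\<pi> x = z"
    have "\<not> (w = a \<and> y = b)" "\<not> (x = a \<and> z = b)"
      using adjacent_pair(5) in_S ord by fastforce+
    then have "w \<notin> {a, b}" "y \<notin> {a, b}" "x \<notin> {a, b}" "z \<notin> {a, b}"
      using chord[of w y] chord[of x z] ord cross by (meson less_trans)+
    then show False
      by (intro noncrossing_onD[OF nc ord]) (use in_S cross in auto)
  qed
qed

lemma predecessor_exists: "\<exists>p\<in>S. p < a \<and> next_in S p = a"
proof -
  define p where "p = Max {y\<in>S. y < a}"
  have fin': "finite {y\<in>S. y < a}" and "0 \<in> {y\<in>S. y < a}" using fin zero_in a_nonzero by auto
  then have "p \<in> {y\<in>S. y < a}" unfolding p_def by (intro Max_in) auto
  then have "p \<in> S" "p < a" "\<And>y. y \<in> S \<Longrightarrow> y < a \<Longrightarrow> y \<le> p"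
    using Max_ge[OF fin'] by (auto simp: p_def)
  moreover have "next_in S p = a"
    using calculation by (intro next_in_eqI[OF fin a_in]) (auto simp: not_less[symmetric])
  ultimately show ?thesis by blast
qed

lemma next_in_remove_adjacent:
  assumes "p \<in> S" "p < a" "next_in S p = a"
  shows "next_in (S - {a, b}) p = next_in S b"
proof -
  have eq: "{y \<in> S - {a, b}. p < y} = {y \<in> S. b < y}"
    using assms adjacent_pair(3,5) next_in_greater(2)[OF fin, of _ p] by fastforce
  then have "(\<exists>y\<in>S - {a, b}. p < y) \<longleftrightarrow> (\<exists>y\<in>S. b < y)" by blast
  then show ?thesis unfolding next_in_def eq by simp
qed

lemma next_in_avoids_adjacent:
  assumes "p \<in> S" "next_in S p = a" "u \<in> S" "u \<notin> {a, p}"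
  shows "next_in S u \<notin> {a, b}"
  using inj_onD[OF inj_on_next_in[OF fin zero_in]] assms a_in b_def by blast

lemma succ_cycle_remove_adjacent:
  assumes p: "p \<in> S" "p < a" "next_in S p = a"
  defines "\<sigma>' \<equiv> \<pi>(a := a, b := b) \<circ> succ_cycle (S - {a, b})"
  shows "\<pi> \<circ> succ_cycle S = \<sigma>'(p := b, b := \<sigma>' p)"
proof
  fix z
  have p_ne: "p \<noteq> a" "p \<noteq> b" using p adjacent_pair(3) by auto
  have b_succ: "\<sigma>' p = \<pi> (next_in S b)"
    using next_in_remove_adjacent[OF p] next_in_avoids_adjacent[OF p(1,3) adjacent_pair(1)] p p_ne
      adjacent_pair(3)
    by (simp add: \<sigma>'_def succ_cycle_def)
  consider "z = b" | "z = p" | "z = a" | "z \<in> S - {a, b, p}" | "z \<notin> S" by blast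
  then show "(\<pi> \<circ> succ_cycle S) z = (\<sigma>'(p := b, b := \<sigma>' p)) z"
  proof cases
    case 4
    then have "next_in S z \<notin> {a, b}" using next_in_avoids_adjacent[OF p(1,3)] by auto
    then show ?thesis using 4 next_in_Diff[OF fin] by (auto simp: \<sigma>'_def succ_cycle_def)
  next
    case 5
    then have "z \<noteq> p" "z \<noteq> a" "z \<noteq> b" using p(1) a_in adjacent_pair(1) by auto
    then show ?thesis using 5 pairing zero_in by (auto simp: \<sigma>'_def succ_cycle_def pairing_on_def)
  qed (use b_succ p p_ne adjacent adjacent_pair(1,3,4) a_in b_def in \<open>auto simp: \<sigma>'_def succ_cycle_def\<close>)
qed

lemma ncycles0_remove_adjacent:
  "ncycles0 (\<pi> \<circ> succ_cycle S) S =
     Suc (ncycles0 (\<pi>(a := a, b := b) \<circ> succ_cycle (S - {a, b})) (S - {a, b}))"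
proof -
  obtain p where p: "p \<in> S" "p < a" "next_in S p = a" using predecessor_exists by blast
  let ?\<sigma> = "\<pi> \<circ> succ_cycle S" and ?\<sigma>' = "\<pi>(a := a, b := b) \<circ> succ_cycle (S - {a, b})"
  have perm: "permutation ?\<sigma>"
    using permutation_pairing_comp_succ_cycle[OF fin zero_in pairing] .
  have perm': "permutation ?\<sigma>'"
    using fin zero_in a_nonzero adjacent_pair(2)
    by (intro permutation_pairing_comp_succ_cycle pairing_on_remove_adjacent) auto
  have "?\<sigma> a = a" "?\<sigma>' b = b"
    using a_in adjacent_pair(4) by (auto simp: succ_cycle_def b_def[symmetric])
  have "ncycles0 ?\<sigma> S = Suc (ncycles0 ?\<sigma> (S - {a}))"
    using ncycles0_insert_fixpoint[OF perm \<open>?\<sigma> a = a\<close> _ a_nonzero] fin a_in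
    by (metis finite_Diff insert_Diff Diff_iff singletonI)
  also have "ncycles0 ?\<sigma> (S - {a}) = ncycles0 ?\<sigma>' (S - {a} - {b})"
    unfolding succ_cycle_remove_adjacent[OF p]
    using p adjacent_pair(2,3) by (intro ncycles0_splice[OF perm' \<open>?\<sigma>' b = b\<close>]) auto
  also have "S - {a} - {b} = S - {a, b}" by auto
  finally show ?thesis .
qed

end

section \<open>Biane's bound\<close>

lemma card_orbits_fixpoint_free:
  assumes perm: "\<sigma> permutes S" and fin: "finite S" and no_fix: "\<And>x. x \<in> S \<Longrightarrow> \<sigma> x \<noteq> x"
  shows "2 * card {orbit \<sigma> x | x. x \<in> S} \<le> card S"
proof -
  define C where "C = {orbit \<sigma> x | x. x \<in> S}"
  have permutation: "permutation \<sigma>" using perm fin permutation_permutes by blast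
  have sub: "A \<subseteq> S" if "A \<in> C" for A using that permutes_orbit_subset[OF perm] unfolding C_def by blast
  have finite_orbit: "finite A" if "A \<in> C" for A using sub[OF that] fin finite_subset by blast
  have "\<Union>C = S" using sub permutation_self_in_orbit[OF permutation] by (auto simp: C_def)
  moreover have disj: "pairwise disjnt C"
  proof (rule pairwiseI)
    fix A B assume "A \<in> C" "B \<in> C" "A \<noteq> B"
    then obtain x y where "A = orbit \<sigma> x" "B = orbit \<sigma> y" by (auto simp: C_def)
    then show "disjnt A B" using orbit_eq_if_mem[OF permutation] \<open>A \<noteq> B\<close> unfolding disjnt_def by blast
  qed
  ultimately have "card S = sum card C"
    using card_Union_disjoint[OF disj finite_orbit] by simp
  moreover have "2 \<le> card A" if "A \<in> C" for A
  proof -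
    obtain x where x: "x \<in> S" "A = orbit \<sigma> x" using \<open>A \<in> C\<close> by (auto simp: C_def)
    then have "{x, \<sigma> x} \<subseteq> A" using permutation_self_in_orbit[OF permutation] orbit.base by fast
    moreover have "card {x, \<sigma> x} = 2" using no_fix[OF x(1)] by simp
    ultimately show ?thesis using card_mono[OF finite_orbit[OF that]] by metis
  qed
  then have "sum (\<lambda>_. 2) C \<le> sum card C" by (rule sum_mono)
  ultimately have "2 * card C \<le> card S" by simp
  then show ?thesis by (simp add: C_def)
qed

lemma ncycles0_Suc:
  assumes perm: "\<sigma> permutes S" and "finite S" "0 \<in> S"
  shows "Suc (ncycles0 \<sigma> S) = card {orbit \<sigma> x | x. x \<in> S}"
proof -
  have permutation: "permutation \<sigma>" using assms permutation_permutes by blast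
  have eq: "{orbit \<sigma> x | x. x \<in> S \<and> 0 \<notin> orbit \<sigma> x} = {orbit \<sigma> x | x. x \<in> S} - {orbit \<sigma> 0}"
    using permutation_self_in_orbit[OF permutation] orbit_eq_if_mem[OF permutation] by blast
  have "finite {orbit \<sigma> x | x. x \<in> S}" using \<open>finite S\<close> by simp
  moreover have "orbit \<sigma> 0 \<in> {orbit \<sigma> x | x. x \<in> S}" using \<open>0 \<in> S\<close> by blast
  ultimately show ?thesis unfolding ncycles0_def eq by (rule card_Suc_Diff1)
qed

lemma ncycles0_no_adjacent_pair:
  assumes fin: "finite S" and zero_in: "0 \<in> S" and pairing: "pairing_on S \<pi>" and "S \<noteq> {0}"
    and no_adjacent: "\<And>x. x \<in> S - {0} \<Longrightarrow> \<pi> x \<noteq> next_in S x"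
  shows "2 * ncycles0 (\<pi> \<circ> succ_cycle S) S + 2 \<le> card S"
proof -
  let ?\<sigma> = "\<pi> \<circ> succ_cycle S"
  have perm: "?\<sigma> permutes S" using pairing_comp_succ_cycle_permutes[OF fin zero_in pairing] .
  have "?\<sigma> z \<noteq> z" if "z \<in> S" for z
  proof (cases "z = 0")
    case True
    obtain y where "y \<in> S" "0 < y" using \<open>S \<noteq> {0}\<close> zero_in by blast
    then have "next_in S 0 \<in> S - {0}" using next_in_greater[OF fin] by fastforce
    then show ?thesis using True zero_in pairing by (auto simp: succ_cycle_def pairing_on_def)
  next
    case False
    show ?thesis
    proof
      assume "?\<sigma> z = z"
      then have "\<pi> (next_in S z) = z" using that by (simp add: succ_cycle_def)
      then have "\<pi> z = next_in S z" using pairing_on_involution[OF pairing] by metis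
      then show False using no_adjacent[of z] that False by blast
    qed
  qed
  then show ?thesis
    using card_orbits_fixpoint_free[OF perm fin] ncycles0_Suc[OF perm fin zero_in] by simp
qed

text \<open>An innermost chord of a noncrossing pairing joins neighbours.\<close>
lemma noncrossing_has_adjacent_pair:
  assumes fin: "finite S" and zero_in: "0 \<in> S" and pairing: "pairing_on S \<pi>" and "S \<noteq> {0}"
    and nc: "noncrossing_on S \<pi>"
  shows "\<exists>x\<in>S - {0}. \<pi> x = next_in S x"
proof -
  have inv: "\<And>u. \<pi> (\<pi> u) = u" using pairing_on_involution[OF pairing] .
  have into: "\<And>u. u \<in> S - {0} \<Longrightarrow> \<pi> u \<in> S - {0} \<and> \<pi> u \<noteq> u"
    using pairing by (auto simp: pairing_on_def)
  obtain y where y: "y \<in> S - {0}" using \<open>S \<noteq> {0}\<close> zero_in by blast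
  then have "\<exists>x. x \<in> S - {0} \<and> x < \<pi> x"
    using into[OF y] inv[of y] by (metis linorder_neqE_nat)
  then obtain a where a: "a \<in> S - {0}" "a < \<pi> a"
    and shortest: "\<And>c. c \<in> S - {0} \<Longrightarrow> c < \<pi> c \<Longrightarrow> \<pi> a - a \<le> \<pi> c - c"
    using ex_has_least_nat[of "\<lambda>x. x \<in> S - {0} \<and> x < \<pi> x" _ "\<lambda>x. \<pi> x - x"] by blast
  have "\<pi> a \<in> S - {0}" using into[OF a(1)] by blast
  define w where "w = next_in S a"
  have w: "a < w" "w \<le> \<pi> a" "w \<in> S - {0}"
    using next_in_greater[OF fin _ a(2)] \<open>\<pi> a \<in> S - {0}\<close> by (auto simp: w_def)
  have "w = \<pi> a"
  proof (rule ccontr)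
    assume "w \<noteq> \<pi> a"
    then have "w < \<pi> a" using w by simp
    have pw: "\<pi> w \<in> S - {0}" "\<pi> w \<noteq> a" "\<pi> w \<noteq> \<pi> a"
      using into[OF w(3)] inv[of w] inv[of a] w \<open>w < \<pi> a\<close> by (metis less_irrefl)+
    consider "\<pi> w < a" | "a < \<pi> w" "\<pi> w < \<pi> a" | "\<pi> a < \<pi> w"
      using pw by linarith
    then show False
    proof cases
      case 1
      show False
        by (rule noncrossing_onD[OF nc, of "\<pi> w" a w "\<pi> a"])
          (use 1 pw w a \<open>w < \<pi> a\<close> \<open>\<pi> a \<in> S - {0}\<close> inv[of w] in auto)
    next
      case 2
      then show False
        using shortest[of w] shortest[of "\<pi> w"] w pw into[OF w(3)] \<open>w < \<pi> a\<close> inv[of w]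
        by (cases "w < \<pi> w") (auto simp: not_less)
    next
      case 3
      show False
        by (rule noncrossing_onD[OF nc, of a w "\<pi> a" "\<pi> w"])
          (use 3 pw w a \<open>w < \<pi> a\<close> \<open>\<pi> a \<in> S - {0}\<close> in auto)
    qed
  qed
  then have "\<pi> a = next_in S a" by (simp add: w_def)
  then show ?thesis using a(1) by blast
qed

theorem pairing_on_cycle_bound:
  assumes "finite S" "0 \<in> S" "pairing_on S \<pi>"
  shows "2 * ncycles0 (\<pi> \<circ> succ_cycle S) S + 1 \<le> card S \<and>
    (2 * ncycles0 (\<pi> \<circ> succ_cycle S) S + 1 = card S \<longleftrightarrow> noncrossing_on S \<pi>)"
  using assms
proof (induction "card S" arbitrary: S \<pi> rule: less_induct)
  case less
  note fin = less.prems(1) and zero_in = less.prems(2) and pairing = less.prems(3)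
  show ?case
  proof (cases "S = {0}")
    case True
    then have "ncycles0 (\<pi> \<circ> succ_cycle S) S = 0" "noncrossing_on S \<pi>"
      using permutation_self_in_orbit[OF permutation_pairing_comp_succ_cycle[OF fin zero_in pairing]]
      by (auto simp: ncycles0_def noncrossing_on_def)
    then show ?thesis using True by simp
  next
    case False
    show ?thesis
    proof (cases "\<exists>a\<in>S - {0}. \<pi> a = next_in S a")
      case True
      then obtain a where a: "a \<in> S" "a \<noteq> 0" "\<pi> a = next_in S a" by blast
      let ?S' = "S - {a, next_in S a}" and ?\<pi>' = "\<pi>(a := a, next_in S a := next_in S a)"
      note remove = card_remove_adjacent noncrossing_on_remove_adjacent ncycles0_remove_adjacent
        pairing_on_remove_adjacent adjacent_pair(2)
      note remove = remove[OF fin zero_in pairing a(1,2) refl a(3)]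
      have "card ?S' < card S" "finite ?S'" "0 \<in> ?S'" "pairing_on ?S' ?\<pi>'"
        using remove(1,4,5) fin zero_in a(2) by auto
      then have "2 * ncycles0 (?\<pi>' \<circ> succ_cycle ?S') ?S' + 1 \<le> card ?S' \<and>
          (2 * ncycles0 (?\<pi>' \<circ> succ_cycle ?S') ?S' + 1 = card ?S' \<longleftrightarrow> noncrossing_on ?S' ?\<pi>')"
        by (rule less.hyps)
      then show ?thesis using remove(1-3) by auto
    next
      case False
      then show ?thesis
        using ncycles0_no_adjacent_pair[OF fin zero_in pairing \<open>S \<noteq> {0}\<close>]
          noncrossing_has_adjacent_pair[OF fin zero_in pairing \<open>S \<noteq> {0}\<close>] by fastforce
    qed
  qed
qed

lemma alpha_eq_succ_cycle: "alpha m = succ_cycle {0..m}"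
proof
  fix i
  show "alpha m i = succ_cycle {0..m} i"
  proof (cases "i < m")
    case True
    then have "next_in {0..m} i = i + 1" by (intro next_in_eqI) auto
    then show ?thesis using True by (simp add: alpha_def succ_cycle_def)
  next
    case False
    then show ?thesis by (auto simp: alpha_def succ_cycle_def next_in_max)
  qed
qed

lemma pair_partition_iff_pairing_on: "pair_partition m \<pi> \<longleftrightarrow> pairing_on {0..m} \<pi>"
proof -
  have "{0..m} - {0} = {1..m}" by auto
  then show ?thesis by (simp add: pair_partition_def pairing_on_def)
qed

lemma noncrossing_iff_noncrossing_on: "noncrossing m \<pi> \<longleftrightarrow> noncrossing_on {0..m} \<pi>"
  unfolding noncrossing_def noncrossing_on_def
  by (intro iff_allI) (auto simp: Suc_le_eq)

lemma cyc0_eq_ncycles0: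
  assumes "permutation \<sigma>"
  shows "cyc0 m \<sigma> = ncycles0 \<sigma> {0..m}"
proof -
  have "cyc_of \<sigma> x = orbit \<sigma> x" for x
    unfolding cyc_of_def orbit_altdef_permutation[OF assms] by auto
  then show ?thesis unfolding cyc0_def ncycles0_def by simp
qed

theorem pair_partition_cycle_bound:
  assumes "pair_partition m \<pi>"
  shows "2 * cyc0 m (\<pi> \<circ> alpha m) \<le> m \<and> (2 * cyc0 m (\<pi> \<circ> alpha m) = m \<longleftrightarrow> noncrossing m \<pi>)"
proof -
  have pairing: "pairing_on {0..m} \<pi>" using assms pair_partition_iff_pairing_on by blast
  then have "cyc0 m (\<pi> \<circ> alpha m) = ncycles0 (\<pi> \<circ> succ_cycle {0..m}) {0..m}"
    unfolding alpha_eq_succ_cycle by (intro cyc0_eq_ncycles0 permutation_pairing_comp_succ_cycle) auto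
  then show ?thesis
    using pairing_on_cycle_bound[OF _ _ pairing] noncrossing_iff_noncrossing_on by simp
qed

lemma pair_partition_in_range:
  "pair_partition m p \<Longrightarrow> x \<in> {1..m} \<Longrightarrow> p x \<in> {1..m} \<and> p x \<noteq> x \<and> p (p x) = x"
  unfolding pair_partition_def by blast

lemma pair_partition_fixes: "pair_partition m p \<Longrightarrow> x \<notin> {1..m} \<Longrightarrow> p x = x"
  unfolding pair_partition_def by blast

lemma pair_partition_involution:
  assumes "pair_partition m p"
  shows "p (p x) = x"
  using pair_partition_in_range[OF assms] pair_partition_fixes[OF assms] by (cases "x \<in> {1..m}") auto

lemma finite_pair_partitions: "finite {p. pair_partition m p}"
proof -
  let ?G = "{g. \<forall>x. (x \<in> {1..m} \<longrightarrow> g x \<in> {1..m}) \<and> (x \<notin> {1..m} \<longrightarrow> g x = 0)}"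
  have "finite ?G" by (rule finite_set_of_finite_funs) auto
  moreover have "{p. pair_partition m p} \<subseteq> (\<lambda>g x. if x \<in> {1..m} then g x else x) ` ?G"
  proof
    fix p assume "p \<in> {p. pair_partition m p}"
    then have pp: "pair_partition m p" by simp
    let ?g = "\<lambda>x. if x \<in> {1..m} then p x else 0"
    have "?g \<in> ?G" using pair_partition_in_range[OF pp] by auto
    moreover have "p = (\<lambda>x. if x \<in> {1..m} then ?g x else x)" using pair_partition_fixes[OF pp] by auto
    ultimately show "p \<in> (\<lambda>g x. if x \<in> {1..m} then g x else x) ` ?G"
      by (intro image_eqI[where x="?g"]) auto
  qed
  ultimately show ?thesis by (rule finite_surj)
qed

text \<open>The points \<open>x < p x\<close> are mapped bijectively onto the points \<open>p x < x\<close>.\<close>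
lemma even_if_pair_partition:
  assumes pp: "pair_partition m p"
  shows "even m"
proof -
  define A where "A = {x\<in>{1..m}. x < p x}"
  define B where "B = {x\<in>{1..m}. p x < x}"
  have "x \<in> A \<union> B" if "x \<in> {1..m}" for x
    using pair_partition_in_range[OF pp that] that by (auto simp: A_def B_def)
  then have AB: "A \<union> B = {1..m}" unfolding A_def B_def by blast
  have "B \<subseteq> p ` A"
  proof
    fix x assume "x \<in> B"
    then have "p x \<in> A" "x = p (p x)" using pair_partition_in_range[OF pp] by (auto simp: A_def B_def)
    then show "x \<in> p ` A" by blast
  qed
  moreover have "p ` A \<subseteq> B"
  proof
    fix y assume "y \<in> p ` A"
    then obtain x where "x \<in> {1..m}" "x < p x" "y = p x" by (auto simp: A_def)
    then show "y \<in> B" using pair_partition_in_range[OF pp, of x] by (simp add: B_def)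
  qed
  ultimately have "p ` A = B" by (rule subset_antisym[rotated])
  moreover have "inj_on p A" by (rule inj_onI) (metis pair_partition_involution[OF pp])
  ultimately have "card B = card A" using card_image by fastforce
  moreover have "card (A \<union> B) = card A + card B" by (rule card_Un_disjoint) (auto simp: A_def B_def)
  ultimately show ?thesis using AB by simp
qed


lemma noncrossingI:
  assumes "\<And>a b c d. 1 \<le> a \<Longrightarrow> a < b \<Longrightarrow> b < c \<Longrightarrow> c < d \<Longrightarrow> d \<le> k \<Longrightarrow>
    p a = c \<Longrightarrow> p b = d \<Longrightarrow> False"
  shows "noncrossing k p"
  using assms unfolding noncrossing_def by blast

lemma noncrossingD:
  assumes "noncrossing k p" "1 \<le> a" "a < b" "b < c" "c < d" "d \<le> k" "p a = c" "p b = d"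
  shows False
  using assms unfolding noncrossing_def by blast

section \<open>The block structure of \<open>PiNK\<close>\<close>

lemma strict_antimono_onto_interval:
  fixes f :: "nat \<Rightarrow> nat"
  assumes decreasing: "\<And>i j. i < j \<Longrightarrow> j \<le> d \<Longrightarrow> f j < f i"
    and bounds: "\<And>i. i \<le> d \<Longrightarrow> v \<le> f i \<and> f i \<le> v + d"
    and "i \<le> d"
  shows "f i = v + d - i"
proof -
  have "f i + i \<le> v + d" using \<open>i \<le> d\<close>
  proof (induction i)
    case 0
    then show ?case using bounds by simp
  next
    case (Suc i)
    then show ?case using decreasing[of i "Suc i"] by simp
  qed
  moreover have "v + (d - i) \<le> f i" using \<open>i \<le> d\<close>
  proof (induction i rule: inc_induct)
    case base
    then show ?case using bounds by simp
  next
    case (step i)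
    then show ?case using decreasing[of i "Suc i"] by simp
  qed
  ultimately show ?thesis by simp
qed


lemma pred_mult_add: "1 \<le> j \<Longrightarrow> (j - 1) * n + n = j * (n::nat)"
  by (cases j) auto

lemma blk_offset:
  assumes "n \<ge> 1" "j \<ge> 1" "r \<in> {1..n}"
  shows "blk n ((j - 1) * n + r) = j"
proof -
  obtain j' r' where "j = Suc j'" "r = Suc r'" "r' < n" using assms by (cases j; cases r) auto
  then have "((j - 1) * n + r - 1) div n = j'" by simp
  then show ?thesis by (simp add: blk_def \<open>j = Suc j'\<close>)
qed

lemma offset_in_range:
  fixes n j k r :: nat
  assumes "n \<ge> 1" "j \<in> {1..k}" "r \<in> {1..n}"
  shows "(j - 1) * n + r \<in> {1..n * k}"
proof -
  obtain j' where "j = Suc j'" using assms by (cases j) auto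
  moreover have "Suc j' * n \<le> k * n" using assms \<open>j = Suc j'\<close> by (intro mult_le_mono1) auto
  ultimately show ?thesis using assms by (auto simp: mult.commute)
qed

lemma block_start:
  fixes n j k :: nat
  shows "n \<ge> 1 \<Longrightarrow> j \<in> {1..k} \<Longrightarrow> (j - 1) * n + 1 \<in> {1..n * k} \<and> blk n ((j - 1) * n + 1) = j"
  using offset_in_range[of n j k 1] blk_offset[of n j 1] by auto

lemma blk_in_range:
  assumes "n \<ge> 1" "i \<in> {1..n * k}"
  shows "blk n i \<in> {1..k}"
proof -
  have "i - 1 < k * n" using assms by (cases i) (auto simp: mult.commute)
  then have "(i - 1) div n < k" using assms by (simp add: div_less_iff_less_mult)
  then show ?thesis by (simp add: blk_def)
qed

lemma blk_bounds:
  assumes "n \<ge> 1" "i \<ge> 1"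
  shows "(blk n i - 1) * n + 1 \<le> i \<and> i \<le> blk n i * n"
proof -
  have blk: "blk n i - 1 = (i - 1) div n" "blk n i * n = (i - 1) div n * n + n" by (simp_all add: blk_def)
  have "(i - 1) mod n < n" using assms by simp
  then show ?thesis unfolding blk using div_mult_mod_eq[of "i - 1" n] assms by linarith
qed

lemma blk_offset_decomp:
  assumes "n \<ge> 1" "i \<ge> 1"
  shows "i - (blk n i - 1) * n \<in> {1..n}" "(blk n i - 1) * n + (i - (blk n i - 1) * n) = i"
proof -
  have "blk n i * n = (blk n i - 1) * n + n" by (simp add: blk_def)
  then show "i - (blk n i - 1) * n \<in> {1..n}" "(blk n i - 1) * n + (i - (blk n i - 1) * n) = i"
    using blk_bounds[OF assms] by auto
qed

lemma blk_mono: "i \<le> i' \<Longrightarrow> blk n i \<le> blk n i'"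
  unfolding blk_def by (simp add: div_le_mono)

lemma less_if_blk_less: "blk n i < blk n i' \<Longrightarrow> i < i'"
  using blk_mono[of i' i n] by (meson not_less)

definition block_reversing :: "nat \<Rightarrow> nat \<Rightarrow> (nat \<Rightarrow> nat) \<Rightarrow> bool" where
  "block_reversing n k \<pi> \<longleftrightarrow> (\<forall>j l. 1 \<le> j \<and> j < l \<and> l \<le> k \<and> bar_pi n \<pi> j = l \<longrightarrow>
     (\<forall>r\<in>{1..n}. \<pi> ((j - 1) * n + r) = l * n + 1 - r))"

lemma block_reversingD:
  "block_reversing n k \<pi> \<Longrightarrow> 1 \<le> j \<Longrightarrow> j < l \<Longrightarrow> l \<le> k \<Longrightarrow> bar_pi n \<pi> j = l \<Longrightarrow> r \<in> {1..n} \<Longrightarrow>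
    \<pi> ((j - 1) * n + r) = l * n + 1 - r"
  by (simp add: block_reversing_def)

context
  fixes n k :: nat and \<pi> :: "nat \<Rightarrow> nat"
  assumes n_pos: "n \<ge> 1" and in_PiNK: "\<pi> \<in> PiNK n k"
begin

lemma PiNK_pair_partition: "pair_partition (n * k) \<pi>"
  using in_PiNK by (simp add: PiNK_def P2_def)

lemma PiNK_in_range: "i \<in> {1..n * k} \<Longrightarrow> \<pi> i \<in> {1..n * k} \<and> \<pi> i \<noteq> i \<and> \<pi> (\<pi> i) = i"
  by (rule pair_partition_in_range[OF PiNK_pair_partition])

lemma PiNK_fixes: "i \<notin> {1..n * k} \<Longrightarrow> \<pi> i = i"
  by (rule pair_partition_fixes[OF PiNK_pair_partition])

lemma PiNK_involution: "\<pi> (\<pi> i) = i"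
  by (rule pair_partition_involution[OF PiNK_pair_partition])

lemma PiNK_blk_ne: "i \<in> {1..n * k} \<Longrightarrow> blk n (\<pi> i) \<noteq> blk n i"
  using in_PiNK unfolding PiNK_def P2_def by blast

lemma PiNK_blk_respects:
  "i1 \<in> {1..n * k} \<Longrightarrow> i2 \<in> {1..n * k} \<Longrightarrow> blk n i1 = blk n i2 \<Longrightarrow> blk n (\<pi> i1) = blk n (\<pi> i2)"
  using in_PiNK unfolding PiNK_def by blast

lemma PiNK_blk: "i \<in> {1..n * k} \<Longrightarrow> blk n (\<pi> i) = bar_pi n \<pi> (blk n i)"
proof -
  assume i: "i \<in> {1..n * k}"
  define i0 where "i0 = (blk n i - 1) * n + 1"
  have "i0 \<in> {1..n * k}" "blk n i0 = blk n i"
    using block_start[OF n_pos blk_in_range[OF n_pos i]] by (auto simp: i0_def)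
  then show ?thesis using PiNK_blk_respects[OF i] by (simp add: bar_pi_def i0_def)
qed

lemma bar_pi_pairing:
  assumes "j \<in> {1..k}"
  shows "bar_pi n \<pi> j \<in> {1..k}" "bar_pi n \<pi> j \<noteq> j" "bar_pi n \<pi> (bar_pi n \<pi> j) = j"
proof -
  define i where "i = (j - 1) * n + 1"
  have i: "i \<in> {1..n * k}" "blk n i = j" "bar_pi n \<pi> j = blk n (\<pi> i)"
    using block_start[OF n_pos assms] by (auto simp: i_def bar_pi_def)
  then have "\<pi> i \<in> {1..n * k}" using PiNK_in_range by blast
  then show "bar_pi n \<pi> j \<in> {1..k}" "bar_pi n \<pi> (bar_pi n \<pi> j) = j"
    using i blk_in_range[OF n_pos] PiNK_blk[of "\<pi> i"] PiNK_involution by auto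
  show "bar_pi n \<pi> j \<noteq> j" using i PiNK_blk_ne[OF i(1)] by simp
qed

lemma PiNK_block_bounds:
  "i \<in> {1..n * k} \<Longrightarrow> blk n (\<pi> i) = l \<Longrightarrow> (l - 1) * n + 1 \<le> \<pi> i \<and> \<pi> i \<le> l * n"
  using blk_bounds[OF n_pos, of "\<pi> i"] PiNK_in_range by auto

text \<open>Two chords from block \<open>j\<close> to a later block \<open>l\<close> must be nested, so \<open>\<pi>\<close> is decreasing on
  block \<open>j\<close> and maps it onto block \<open>l\<close>.\<close>
lemma block_reversing_if_noncrossing:
  assumes nc: "noncrossing (n * k) \<pi>"
  shows "block_reversing n k \<pi>"
  unfolding block_reversing_def
proof (intro allI impI ballI)
  fix j l r assume jl: "1 \<le> j \<and> j < l \<and> l \<le> k \<and> bar_pi n \<pi> j = l" and r: "r \<in> {1..n}"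
  have jn: "(j - 1) * n + n = j * n" and ln: "(l - 1) * n + n = l * n" using jl pred_mult_add by auto
  have "j * n \<le> (l - 1) * n" using jl by (intro mult_le_mono1) auto
  define f where "f t = \<pi> ((j - 1) * n + 1 + t)" for t
  have in_block: "(j - 1) * n + 1 + t \<in> {1..n * k}" "blk n ((j - 1) * n + 1 + t) = j"
    "(j - 1) * n + 1 + t < (l - 1) * n + 1" if "t \<le> n - 1" for t
  proof -
    have "Suc t \<in> {1..n}" using that n_pos by auto
    then show "(j - 1) * n + 1 + t \<in> {1..n * k}" "blk n ((j - 1) * n + 1 + t) = j"
      using offset_in_range[OF n_pos, of j k "Suc t"] blk_offset[OF n_pos, of j "Suc t"] jl by auto
    show "(j - 1) * n + 1 + t < (l - 1) * n + 1"
      using that n_pos jn \<open>j * n \<le> (l - 1) * n\<close> by linarith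
  qed
  have bounds: "(l - 1) * n + 1 \<le> f t \<and> f t \<le> (l - 1) * n + 1 + (n - 1)" if "t \<le> n - 1" for t
    using PiNK_block_bounds[OF in_block(1)[OF that]] PiNK_blk[OF in_block(1)[OF that]]
      in_block(2)[OF that] jl ln n_pos by (auto simp: f_def)
  have "f u < f t" if "t < u" "u \<le> n - 1" for t u
  proof (rule ccontr)
    assume "\<not> f u < f t"
    moreover have "f u \<noteq> f t"
      using PiNK_involution that unfolding f_def by (metis add_left_cancel less_irrefl)
    ultimately have "f t < f u" by simp
    moreover have "(j - 1) * n + 1 + u < f t" using in_block(3)[OF that(2)] bounds[of t] that by linarith
    ultimately show False
      using noncrossingD[OF nc, of "(j - 1) * n + 1 + t" "(j - 1) * n + 1 + u" "f t" "f u"] that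
        in_block(1)[OF that(2)] PiNK_in_range[OF in_block(1)[OF that(2)]] by (auto simp: f_def)
  qed
  then have "f (r - 1) = (l - 1) * n + 1 + (n - 1) - (r - 1)"
    using bounds r by (intro strict_antimono_onto_interval) auto
  moreover have "(j - 1) * n + 1 + (r - 1) = (j - 1) * n + r"
    and "(l - 1) * n + 1 + (n - 1) - (r - 1) = l * n + 1 - r"
    using r n_pos ln by auto
  ultimately show "\<pi> ((j - 1) * n + r) = l * n + 1 - r" by (simp add: f_def)
qed

lemma noncrossing_if_block_reversing:
  assumes nc: "noncrossing k (bar_pi n \<pi>)" and rev: "block_reversing n k \<pi>"
  shows "noncrossing (n * k) \<pi>"
proof (rule noncrossingI)
  fix a b c d assume ord: "1 \<le> a" "a < b" "b < c" "c < d" "d \<le> n * k" and cross: "\<pi> a = c" "\<pi> b = d"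
  have in_range: "a \<in> {1..n * k}" "b \<in> {1..n * k}" using ord by auto
  define A B C D where "A = blk n a" and "B = blk n b" and "C = blk n c" and "D = blk n d"
  have bars: "bar_pi n \<pi> A = C" "bar_pi n \<pi> B = D"
    using PiNK_blk[OF in_range(1)] PiNK_blk[OF in_range(2)] cross by (auto simp: A_def B_def C_def D_def)
  have mono: "A \<le> B" "B \<le> C" "C \<le> D" using ord blk_mono by (auto simp: A_def B_def C_def D_def)
  have blocks: "A \<in> {1..k}" "B \<in> {1..k}" using blk_in_range[OF n_pos] in_range by (auto simp: A_def B_def)
  note A = bar_pi_pairing[OF blocks(1)] and B = bar_pi_pairing[OF blocks(2)]
  show False
  proof (cases "A = B")
    case True
    then have "A < C" using A(2) bars mono by auto
    define ra rb where "ra = a - (A - 1) * n" and "rb = b - (A - 1) * n"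
    have "a = (A - 1) * n + ra" "ra \<in> {1..n}" "b = (A - 1) * n + rb" "rb \<in> {1..n}"
      using blk_offset_decomp[OF n_pos, of a] blk_offset_decomp[OF n_pos, of b] ord True
      by (auto simp: ra_def rb_def A_def B_def)
    moreover have "C \<le> k" "1 \<le> A" using A(1) bars blocks by auto
    ultimately have "c = C * n + 1 - ra" "d = C * n + 1 - rb" "ra < rb"
      using block_reversingD[OF rev _ \<open>A < C\<close>] bars cross ord by auto
    moreover have "n \<le> C * n" using \<open>A < C\<close> by simp
    ultimately show False using \<open>c < d\<close> \<open>rb \<in> {1..n}\<close> by linarith
  next
    case False
    then have "A < B" using mono by simp
    moreover have "B < C"
    proof (rule ccontr)
      assume "\<not> B < C"
      then have "D = A" using mono bars A(3) by simp
      then show False using mono \<open>A < B\<close> by simp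
    qed
    moreover have "C < D"
    proof (rule ccontr)
      assume "\<not> C < D"
      then have "C = D" using mono by simp
      then show False using bars A(3) B(3) \<open>A \<noteq> B\<close> by metis
    qed
    moreover have "D \<le> k" using B(1) bars by simp
    ultimately show False using noncrossingD[OF nc, of A B C D] bars blocks by auto
  qed
qed

theorem noncrossing_iff_block_reversing:
  "noncrossing (n * k) \<pi> \<longleftrightarrow> noncrossing k (bar_pi n \<pi>) \<and> block_reversing n k \<pi>"
proof
  assume nc: "noncrossing (n * k) \<pi>"
  have "noncrossing k (bar_pi n \<pi>)"
  proof (rule noncrossingI)
    fix a b c d assume ord: "1 \<le> a" "a < b" "b < c" "c < d" "d \<le> k"
      and cross: "bar_pi n \<pi> a = c" "bar_pi n \<pi> b = d"
    define x y where "x = (a - 1) * n + 1" and "y = (b - 1) * n + 1"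
    have xy: "x \<in> {1..n * k}" "blk n x = a" "y \<in> {1..n * k}" "blk n y = b"
      using block_start[OF n_pos, of a k] block_start[OF n_pos, of b k] ord by (auto simp: x_def y_def)
    then have "blk n (\<pi> x) = c" "blk n (\<pi> y) = d" using PiNK_blk cross by auto
    then show False
      using noncrossingD[OF nc, of x y "\<pi> x" "\<pi> y"] less_if_blk_less[of n] xy ord
        PiNK_in_range[OF xy(3)] by auto
  qed
  then show "noncrossing k (bar_pi n \<pi>) \<and> block_reversing n k \<pi>"
    using block_reversing_if_noncrossing[OF nc] by blast
qed (use noncrossing_if_block_reversing in blast)

end

section \<open>Catalan numbers\<close>

lemma catalan_fact: "catalan p = fact (2 * p) / (fact p * fact (Suc p))"
proof -
  have "catalan p = fact (2 * p) / (fact p * fact (2 * p - p)) / real (p + 1)"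
    unfolding catalan_def using binomial_fact[of p "2 * p", where 'a=real] by simp
  also have "\<dots> = fact (2 * p) / (fact p * fact (Suc p))"
    by (simp add: mult_2 field_simps)
  finally show ?thesis .
qed

lemma catalan_Suc: "catalan (Suc p) = catalan p * (2 * (2 * real p + 1)) / (real p + 2)"
proof -
  have "fact (2 * Suc p) = (2 * real p + 2) * (2 * real p + 1) * fact (2 * p)"
    by (simp add: algebra_simps)
  moreover have "fact (Suc (Suc p)) = (real p + 2) * ((real p + 1) * fact p)"
    by (simp add: algebra_simps)
  moreover have "fact (Suc p) = (real p + 1) * fact p" by simp
  moreover have "real p + 2 \<noteq> 0" "real p + 1 \<noteq> 0" by linarith+
  ultimately show ?thesis unfolding catalan_fact
    by (simp add: divide_simps) (simp add: algebra_simps)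
qed

text \<open>The Catalan recurrence is read off from Vandermonde's identity
  \<open>\<Sum>k\<le>n. (1/2 gchoose k) (1/2 gchoose (n - k)) = (1 gchoose n) = 0\<close> for \<open>n \<ge> 2\<close>.\<close>
lemma gbinomial_half_Suc: "((1/2::real) gchoose (Suc j)) = (-1)^j * catalan j / 2^(2*j+1)"
proof (induction j)
  case 0
  then show ?case by (simp add: catalan_def)
next
  case (Suc j)
  have "((1/2::real) gchoose (Suc (Suc j))) =
      ((1/2) gchoose (Suc j)) * (1/2 - real (Suc j)) / real (Suc (Suc j))"
    using gbinomial_mult_1[of "1/2::real" "Suc j"] by (simp add: field_simps)
  also have "\<dots> = (-1)^j * catalan j / 2^(2*j+1) * (1/2 - (real j + 1)) / (real j + 2)"
    using Suc by (simp add: add.commute)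
  also have "\<dots> = (-1)^(Suc j) * (catalan j * (2 * (2 * real j + 1)) / (real j + 2)) / 2^(2*(Suc j)+1)"
    by (simp add: divide_simps power_add) (simp add: algebra_simps)
  also have "\<dots> = (-1)^(Suc j) * catalan (Suc j) / 2^(2*(Suc j)+1)"
    by (simp add: catalan_Suc)
  finally show ?case .
qed

lemma catalan_Suc_convolution: "catalan (Suc p) = (\<Sum>i=0..p. catalan i * catalan (p - i))"
proof -
  define g where "g k = ((1/2::real) gchoose k)" for k
  have "0 = ((1/2 + 1/2::real) gchoose (Suc (Suc p)))"
    using binomial_gbinomial[of 1 "Suc (Suc p)", where 'a=real] by simp
  also have "\<dots> = (\<Sum>k=0..Suc (Suc p). g k * g (Suc (Suc p) - k))"
    unfolding g_def by (rule gbinomial_Vandermonde[symmetric])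
  also have "\<dots> =
      g 0 * g (Suc (Suc p)) + (\<Sum>i=0..p. g (Suc i) * g (Suc (Suc p) - Suc i)) + g (Suc (Suc p)) * g 0"
    unfolding sum.atLeast0_atMost_Suc_shift[of _ "Suc p"] sum.atLeast0_atMost_Suc[of _ p] by simp
  also have "\<dots> = 2 * g (Suc (Suc p)) + (\<Sum>i=0..p. g (Suc i) * g (Suc (Suc p) - Suc i))"
    by (simp add: g_def)
  also have "(\<Sum>i=0..p. g (Suc i) * g (Suc (Suc p) - Suc i)) =
      (\<Sum>i=0..p. (-1)^p / 2^(2*p+2) * (catalan i * catalan (p - i)))"
  proof (rule sum.cong)
    fix i assume "i \<in> {0..p}"
    then have "Suc (Suc p) - Suc i = Suc (p - i)" and signs: "(-1::real)^i * (-1)^(p-i) = (-1)^p"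
      and powers: "(2::real)^(2*i+1) * 2^(2*(p-i)+1) = 2^(2*p+2)"
      by (auto simp: power_add[symmetric])
    then show "g (Suc i) * g (Suc (Suc p) - Suc i) = (-1)^p / 2^(2*p+2) * (catalan i * catalan (p - i))"
      unfolding g_def \<open>Suc (Suc p) - Suc i = Suc (p - i)\<close> gbinomial_half_Suc
      using signs powers by (simp add: field_simps)
  qed simp
  also have "\<dots> = (-1)^p / 2^(2*p+2) * (\<Sum>i=0..p. catalan i * catalan (p - i))"
    by (rule sum_distrib_left[symmetric])
  also have "g (Suc (Suc p)) = (-1)^(Suc p) * catalan (Suc p) / 2^(2*p+3)"
    using gbinomial_half_Suc[of "Suc p"] unfolding g_def numeral_3_eq_3 by simp
  finally show ?thesis by (simp add: field_simps power_add)
qed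

section \<open>Counting noncrossing pair partitions\<close>

definition nc_pair_partitions :: "nat \<Rightarrow> (nat \<Rightarrow> nat) set" where
  "nc_pair_partitions m = {p. pair_partition m p \<and> noncrossing m p}"

lemma finite_nc_pair_partitions: "finite (nc_pair_partitions m)"
  by (rule finite_subset[OF _ finite_pair_partitions]) (auto simp: nc_pair_partitions_def)

lemma nc_pair_partitions_0: "nc_pair_partitions 0 = {id}"
  by (auto simp: nc_pair_partitions_def pair_partition_def noncrossing_def)

definition shift_restrict :: "(nat \<Rightarrow> nat) \<Rightarrow> nat \<Rightarrow> nat \<Rightarrow> nat \<Rightarrow> nat" where
  "shift_restrict p lo len x = (if 1 \<le> x \<and> x \<le> len then p (x + lo) - lo else x)"

lemma shift_restrict_in_nc:
  assumes p: "p \<in> nc_pair_partitions m" and "lo + len \<le> m"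
    and closed: "\<And>x. lo < x \<Longrightarrow> x \<le> lo + len \<Longrightarrow> lo < p x \<and> p x \<le> lo + len"
  shows "shift_restrict p lo len \<in> nc_pair_partitions len"
proof -
  have pp: "pair_partition m p" and nc: "noncrossing m p" using p by (auto simp: nc_pair_partitions_def)
  let ?q = "shift_restrict p lo len"
  have q: "?q x \<in> {1..len} \<and> ?q x + lo = p (x + lo)" if "x \<in> {1..len}" for x
    using closed[of "x + lo"] that by (auto simp: shift_restrict_def)
  have "pair_partition len ?q" unfolding pair_partition_def
  proof (intro conjI ballI allI impI)
    fix x assume x: "x \<in> {1..len}"
    then have "x + lo \<in> {1..m}" using \<open>lo + len \<le> m\<close> by auto
    then show "?q x \<in> {1..len}" "?q x \<noteq> x"
      using q[OF x] pair_partition_in_range[OF pp, of "x + lo"] by auto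
    have "?q (?q x) + lo = p (?q x + lo)" using q[of "?q x"] q[OF x] by blast
    also have "\<dots> = x + lo" using q[OF x] pair_partition_involution[OF pp] by simp
    finally show "?q (?q x) = x" by simp
  next
    fix x assume "x \<notin> {1..len}"
    then show "?q x = x" by (auto simp: shift_restrict_def)
  qed
  moreover have "noncrossing len ?q"
  proof (rule noncrossingI)
    fix a b c d assume ord: "1 \<le> a" "a < b" "b < c" "c < d" "d \<le> len" and cross: "?q a = c" "?q b = d"
    then have "p (a + lo) = c + lo" "p (b + lo) = d + lo" using q[of a] q[of b] by auto
    then show False using noncrossingD[OF nc, of "a + lo" "b + lo" "c + lo" "d + lo"] ord \<open>lo + len \<le> m\<close>
      by simp
  qed
  ultimately show ?thesis by (simp add: nc_pair_partitions_def)
qed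

definition join_under_arc :: "nat \<Rightarrow> nat \<Rightarrow> (nat \<Rightarrow> nat) \<Rightarrow> (nat \<Rightarrow> nat) \<Rightarrow> nat \<Rightarrow> nat" where
  "join_under_arc t m p1 p2 x =
     (if x = 1 then t else if x = t then 1
      else if 2 \<le> x \<and> x < t then p1 (x - 1) + 1
      else if t < x \<and> x \<le> m then p2 (x - t) + t else x)"

lemma join_under_arc_inside:
  assumes "pair_partition (t - 2) p1" "2 \<le> x" "x < t"
  shows "join_under_arc t m p1 p2 x = p1 (x - 1) + 1"
    "2 \<le> join_under_arc t m p1 p2 x \<and> join_under_arc t m p1 p2 x < t"
    "join_under_arc t m p1 p2 x \<noteq> x" "join_under_arc t m p1 p2 (join_under_arc t m p1 p2 x) = x"
proof -
  have "x - 1 \<in> {1..t - 2}" using assms by auto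
  then have p1: "p1 (x - 1) \<in> {1..t - 2}" "p1 (x - 1) \<noteq> x - 1" "p1 (p1 (x - 1)) = x - 1"
    using pair_partition_in_range[OF assms(1)] by blast+
  show eq: "join_under_arc t m p1 p2 x = p1 (x - 1) + 1" using assms by (simp add: join_under_arc_def)
  show "2 \<le> join_under_arc t m p1 p2 x \<and> join_under_arc t m p1 p2 x < t" using eq p1 by auto
  show "join_under_arc t m p1 p2 x \<noteq> x" using eq p1 assms by auto
  show "join_under_arc t m p1 p2 (join_under_arc t m p1 p2 x) = x"
    using eq p1 assms by (auto simp: join_under_arc_def)
qed

lemma join_under_arc_outside:
  assumes "pair_partition (m - t) p2" "2 \<le> t" "t < x" "x \<le> m"
  shows "join_under_arc t m p1 p2 x = p2 (x - t) + t"
    "t < join_under_arc t m p1 p2 x \<and> join_under_arc t m p1 p2 x \<le> m"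
    "join_under_arc t m p1 p2 x \<noteq> x" "join_under_arc t m p1 p2 (join_under_arc t m p1 p2 x) = x"
proof -
  have "x - t \<in> {1..m - t}" using assms by auto
  then have p2: "p2 (x - t) \<in> {1..m - t}" "p2 (x - t) \<noteq> x - t" "p2 (p2 (x - t)) = x - t"
    using pair_partition_in_range[OF assms(1)] by blast+
  show eq: "join_under_arc t m p1 p2 x = p2 (x - t) + t" using assms by (simp add: join_under_arc_def)
  show "t < join_under_arc t m p1 p2 x \<and> join_under_arc t m p1 p2 x \<le> m" using eq p2 by auto
  show "join_under_arc t m p1 p2 x \<noteq> x" using eq p2 assms by auto
  show "join_under_arc t m p1 p2 (join_under_arc t m p1 p2 x) = x"
    using eq p2 assms by (auto simp: join_under_arc_def)
qed

lemma pair_partition_join_under_arc: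
  assumes t: "2 \<le> t" "t \<le> m" and pp1: "pair_partition (t - 2) p1" and pp2: "pair_partition (m - t) p2"
  shows "pair_partition m (join_under_arc t m p1 p2)"
proof -
  let ?c = "join_under_arc t m p1 p2"
  have involutive: "?c x \<in> {1..m} \<and> ?c x \<noteq> x \<and> ?c (?c x) = x" if x: "x \<in> {1..m}" for x
  proof -
    consider "x = 1" | "x = t" | "2 \<le> x \<and> x < t" | "t < x \<and> x \<le> m" using x t by force
    then show ?thesis
    proof cases
      case 3
      then show ?thesis using join_under_arc_inside[OF pp1, of x m p2] t by auto
    next
      case 4
      then show ?thesis using join_under_arc_outside[OF pp2 t(1), of x p1] by auto
    qed (use t in \<open>auto simp: join_under_arc_def\<close>)
  qed
  show ?thesis unfolding pair_partition_def
  proof (intro conjI ballI allI impI)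
    fix x assume "x \<in> {1..m}"
    then show "?c x \<in> {1..m}" "?c x \<noteq> x" "?c (?c x) = x" using involutive by blast+
  next
    fix x assume "x \<notin> {1..m}"
    then show "?c x = x" using t by (auto simp: join_under_arc_def)
  qed
qed

lemma noncrossing_join_under_arc:
  assumes t: "2 \<le> t" "t \<le> m"
    and p1: "p1 \<in> nc_pair_partitions (t - 2)" and p2: "p2 \<in> nc_pair_partitions (m - t)"
  shows "noncrossing m (join_under_arc t m p1 p2)"
proof (rule noncrossingI)
  have pp1: "pair_partition (t - 2) p1" and nc1: "noncrossing (t - 2) p1"
    and pp2: "pair_partition (m - t) p2" and nc2: "noncrossing (m - t) p2"
    using p1 p2 by (auto simp: nc_pair_partitions_def)
  let ?c = "join_under_arc t m p1 p2"
  note inside = join_under_arc_inside[OF pp1] and outside = join_under_arc_outside[OF pp2 t(1)]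
  have ends: "?c 1 = t" "?c t = 1" using t by (auto simp: join_under_arc_def)
  fix a b c d assume ord: "1 \<le> a" "a < b" "b < c" "c < d" "d \<le> m" and cross: "?c a = c" "?c b = d"
  consider "a = 1" | "a = t" | "2 \<le> a \<and> a < t" | "t < a" using ord t by force
  then show False
  proof cases
    case 1
    then have "c = t" using ends(1) cross(1) by simp
    then have "2 \<le> b" "b < t" using ord 1 by auto
    then have "d < t" using inside(2)[of b m p2] cross(2) by simp
    then show False using ord \<open>c = t\<close> by simp
  next
    case 2
    then show False using ends(2) ord cross(1) by simp
  next
    case 3
    then have c: "c = p1 (a - 1) + 1" "c < t" using inside(1,2)[of a m p2] cross(1) by auto
    then have b: "2 \<le> b" "b < t" using ord 3 by auto
    then have d: "d = p1 (b - 1) + 1" "d < t" using inside(1,2)[of b m p2] cross(2) by auto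
    show False
      by (rule noncrossingD[OF nc1, of "a - 1" "b - 1" "c - 1" "d - 1"]) (use 3 ord b c d in auto)
  next
    case 4
    then have "c = p2 (a - t) + t" "d = p2 (b - t) + t"
      using outside(1)[of a p1] outside(1)[of b p1] ord cross by auto
    then show False
      by (intro noncrossingD[OF nc2, of "a - t" "b - t" "c - t" "d - t"]) (use 4 ord in auto)
  qed
qed

lemma join_under_arc_in_nc:
  assumes "2 \<le> t" "t \<le> m" "p1 \<in> nc_pair_partitions (t - 2)" "p2 \<in> nc_pair_partitions (m - t)"
  shows "join_under_arc t m p1 p2 \<in> nc_pair_partitions m"
  using pair_partition_join_under_arc[OF assms(1,2)] noncrossing_join_under_arc[OF assms] assms(3,4)
  by (simp add: nc_pair_partitions_def)

lemma nc_first_arc: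
  assumes p: "p \<in> nc_pair_partitions m" and "m \<ge> 1"
  shows "p 1 \<in> {2..m}"
    and inner: "\<And>x. 1 < x \<Longrightarrow> x < p 1 \<Longrightarrow> 1 < p x \<and> p x < p 1"
    and outer: "\<And>x. p 1 < x \<Longrightarrow> x \<le> m \<Longrightarrow> p 1 < p x \<and> p x \<le> m"
proof -
  have pp: "pair_partition m p" and nc: "noncrossing m p" using p by (auto simp: nc_pair_partitions_def)
  have t: "p 1 \<in> {1..m}" "p 1 \<noteq> 1" "p (p 1) = 1" using pair_partition_in_range[OF pp, of 1] \<open>m \<ge> 1\<close> by auto
  then show "p 1 \<in> {2..m}" by auto
  have px: "p x \<in> {1..m}" "p x \<noteq> x" "p x \<noteq> 1" "p x \<noteq> p 1" if "1 < x" "x \<noteq> p 1" "x \<le> m" for x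
  proof -
    show "p x \<in> {1..m}" "p x \<noteq> x" using pair_partition_in_range[OF pp, of x] that by auto
    show "p x \<noteq> 1" "p x \<noteq> p 1"
      using pair_partition_involution[OF pp, of x] t(3) that(1,2) by (metis less_irrefl)+
  qed
  show in_arc: "1 < p x \<and> p x < p 1" if "1 < x" "x < p 1" for x
  proof -
    have "\<not> p 1 < p x"
      using noncrossingD[OF nc, of 1 x "p 1" "p x"] px[of x] that t by auto
    then show ?thesis using px[of x] that t by auto
  qed
  show "p 1 < p x \<and> p x \<le> m" if "p 1 < x" "x \<le> m" for x
  proof -
    have "\<not> p x < p 1"
      using in_arc[of "p x"] px[of x] that pair_partition_involution[OF pp, of x] by force
    then show ?thesis using px[of x] that t by auto
  qed
qed

lemma join_under_arc_shift_restrict: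
  assumes p: "p \<in> nc_pair_partitions m" and "m \<ge> 1"
  shows "shift_restrict p 1 (p 1 - 2) \<in> nc_pair_partitions (p 1 - 2)"
    and "shift_restrict p (p 1) (m - p 1) \<in> nc_pair_partitions (m - p 1)"
    and "join_under_arc (p 1) m (shift_restrict p 1 (p 1 - 2)) (shift_restrict p (p 1) (m - p 1)) = p"
proof -
  note arc = nc_first_arc[OF assms]
  have pp: "pair_partition m p" using p by (simp add: nc_pair_partitions_def)
  have "1 < p x \<and> p x \<le> 1 + (p 1 - 2)" if "1 < x" "x \<le> 1 + (p 1 - 2)" for x
  proof -
    have "x < p 1" using that arc(1) by auto
    then show ?thesis using arc(1) arc(2)[of x] that by auto
  qed
  then show "shift_restrict p 1 (p 1 - 2) \<in> nc_pair_partitions (p 1 - 2)"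
    using arc(1) by (intro shift_restrict_in_nc[OF p]) auto
  have "p 1 < p x \<and> p x \<le> p 1 + (m - p 1)" if "p 1 < x" "x \<le> p 1 + (m - p 1)" for x
  proof -
    have "x \<le> m" using that arc(1) by auto
    then show ?thesis using arc(1) arc(3)[of x] that by auto
  qed
  then show "shift_restrict p (p 1) (m - p 1) \<in> nc_pair_partitions (m - p 1)"
    using arc(1) by (intro shift_restrict_in_nc[OF p]) auto
  show "join_under_arc (p 1) m (shift_restrict p 1 (p 1 - 2)) (shift_restrict p (p 1) (m - p 1)) = p"
  proof
    fix x
    consider "x = 1" | "x = p 1" | "2 \<le> x \<and> x < p 1" | "p 1 < x \<and> x \<le> m" | "x \<notin> {1..m}"
      using arc(1) by force
    then show
      "join_under_arc (p 1) m (shift_restrict p 1 (p 1 - 2)) (shift_restrict p (p 1) (m - p 1)) x = p x"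
    proof cases
      case 2
      then show ?thesis using pair_partition_involution[OF pp, of 1] by (simp add: join_under_arc_def)
    next
      case 3
      then show ?thesis using arc(2)[of x] by (auto simp: join_under_arc_def shift_restrict_def)
    next
      case 4
      then show ?thesis using arc(3)[of x] by (auto simp: join_under_arc_def shift_restrict_def)
    next
      case 5
      then show ?thesis using pair_partition_fixes[OF pp 5] arc(1) by (auto simp: join_under_arc_def)
    qed (simp add: join_under_arc_def)
  qed
qed

lemma join_under_arc_inj:
  assumes "2 \<le> t" "t \<le> m"
    and "pair_partition (t - 2) p1" "pair_partition (t - 2) p1'"
    and "pair_partition (m - t) p2" "pair_partition (m - t) p2'"
    and eq: "join_under_arc t m p1 p2 = join_under_arc t m p1' p2'"
  shows "p1 = p1' \<and> p2 = p2'"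
proof (intro conjI ext)
  fix y
  show "p1 y = p1' y"
  proof (cases "y \<in> {1..t - 2}")
    case True
    then have "Suc y \<noteq> t" "2 \<le> Suc y" "Suc y < t" by auto
    then show ?thesis using fun_cong[OF eq, of "Suc y"] by (simp add: join_under_arc_def)
  qed (use pair_partition_fixes assms in metis)
  show "p2 y = p2' y"
  proof (cases "y \<in> {1..m - t}")
    case True
    then have "y + t \<noteq> 1" "y + t \<noteq> t" "t < y + t" "y + t \<le> m" using \<open>2 \<le> t\<close> \<open>t \<le> m\<close> by auto
    then show ?thesis using fun_cong[OF eq, of "y + t"] by (simp add: join_under_arc_def)
  qed (use pair_partition_fixes assms in metis)
qed

lemma nc_pair_partitions_first_arc_decomp:
  "nc_pair_partitions (2 * q + 2) =
     (\<Union>i\<in>{0..q}. (\<lambda>(p1, p2). join_under_arc (2 * i + 2) (2 * q + 2) p1 p2) `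
        (nc_pair_partitions (2 * i) \<times> nc_pair_partitions (2 * (q - i))))"
    (is "_ = (\<Union>i\<in>{0..q}. ?J i ` ?P i)")
proof
  show "nc_pair_partitions (2 * q + 2) \<subseteq> (\<Union>i\<in>{0..q}. ?J i ` ?P i)"
  proof
    fix p assume p: "p \<in> nc_pair_partitions (2 * q + 2)"
    have "1 \<le> 2 * q + 2" by simp
    note decomp = join_under_arc_shift_restrict[OF p this]
    have "p 1 \<in> {2..2 * q + 2}" using nc_first_arc(1)[OF p \<open>1 \<le> 2 * q + 2\<close>] .
    moreover have "even (p 1 - 2)"
      using decomp(1) even_if_pair_partition unfolding nc_pair_partitions_def by blast
    then obtain i where "p 1 - 2 = 2 * i" by (rule evenE)
    ultimately have i: "p 1 = 2 * i + 2" "i \<in> {0..q}" by auto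
    then have "2 * q + 2 - p 1 = 2 * (q - i)" by simp
    then show "p \<in> (\<Union>i\<in>{0..q}. ?J i ` ?P i)"
      using decomp i by (intro UN_I[OF i(2)] image_eqI[where x="(shift_restrict p 1 (p 1 - 2),
          shift_restrict p (p 1) (2 * q + 2 - p 1))"]) auto
  qed
  show "(\<Union>i\<in>{0..q}. ?J i ` ?P i) \<subseteq> nc_pair_partitions (2 * q + 2)"
    by (auto intro!: join_under_arc_in_nc simp: right_diff_distrib')
qed

lemma card_nc_pair_partitions_Suc:
  "card (nc_pair_partitions (2 * q + 2)) =
     (\<Sum>i=0..q. card (nc_pair_partitions (2 * i)) * card (nc_pair_partitions (2 * (q - i))))"
proof -
  let ?J = "\<lambda>i (p1, p2). join_under_arc (2 * i + 2) (2 * q + 2) p1 p2"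
    and ?P = "\<lambda>i. nc_pair_partitions (2 * i) \<times> nc_pair_partitions (2 * (q - i))"
  have first: "p 1 = 2 * i + 2" if "p \<in> ?J i ` ?P i" for p i
    using that by (auto simp: join_under_arc_def)
  have disjoint: "?J i ` ?P i \<inter> ?J j ` ?P j = {}" if "i \<noteq> j" for i j
    using first[of _ i] first[of _ j] that by force
  have "inj_on (?J i) (?P i)" if "i \<in> {0..q}" for i
    using join_under_arc_inj[of "2 * i + 2" "2 * q + 2"] that
    by (auto intro!: inj_onI simp: nc_pair_partitions_def right_diff_distrib')
  then have "card (?J i ` ?P i) = card (nc_pair_partitions (2 * i)) * card (nc_pair_partitions (2 * (q - i)))"
    if "i \<in> {0..q}" for i
    using that by (simp add: card_image card_cartesian_product)
  then show ?thesis
    unfolding nc_pair_partitions_first_arc_decomp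
    using disjoint finite_nc_pair_partitions by (subst card_UN_disjoint) auto
qed

theorem card_nc_pair_partitions: "real (card (nc_pair_partitions (2 * q))) = catalan q"
proof (induction q rule: less_induct)
  case (less q)
  show ?case
  proof (cases q)
    case 0
    then show ?thesis by (simp add: nc_pair_partitions_0 catalan_def)
  next
    case (Suc q')
    then have "real (card (nc_pair_partitions (2 * q))) =
        (\<Sum>i=0..q'. real (card (nc_pair_partitions (2 * i))) *
          real (card (nc_pair_partitions (2 * (q' - i)))))"
      using card_nc_pair_partitions_Suc[of q'] by simp
    also have "\<dots> = (\<Sum>i=0..q'. catalan i * catalan (q' - i))"
      using less Suc by (intro sum.cong) auto
    finally show ?thesis using catalan_Suc_convolution Suc by simp
  qed
qed

section \<open>Noncrossing elements of \<open>PiNK\<close>\<close>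

definition block_pairing :: "nat \<Rightarrow> nat \<Rightarrow> (nat \<Rightarrow> nat) \<Rightarrow> nat \<Rightarrow> nat" where
  "block_pairing n k \<pi> j = (if j \<in> {1..k} then bar_pi n \<pi> j else j)"

text \<open>The \<open>r\<close>-th point of block \<open>j\<close> is paired with the \<open>(n + 1 - r)\<close>-th point of block \<open>p j\<close>.\<close>
definition block_lift :: "nat \<Rightarrow> nat \<Rightarrow> (nat \<Rightarrow> nat) \<Rightarrow> nat \<Rightarrow> nat" where
  "block_lift n k p i = (if i \<in> {1..n * k} then (p (blk n i) + blk n i - 1) * n + 1 - i else i)"

lemma block_lift_offset:
  assumes "n \<ge> 1" "pair_partition k p" "j \<in> {1..k}" "r \<in> {1..n}"
  shows "block_lift n k p ((j - 1) * n + r) = (p j - 1) * n + (n + 1 - r)"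
    and "(p j - 1) * n + (n + 1 - r) \<in> {1..n * k}" "blk n ((p j - 1) * n + (n + 1 - r)) = p j"
proof -
  have pj: "p j \<in> {1..k}" using pair_partition_in_range[OF assms(2,3)] by simp
  have "(p j + j - 1) * n = (p j - 1) * n + (j - 1) * n + n"
    using pj assms(3) by (cases j; cases "p j") (auto simp: algebra_simps)
  then show "block_lift n k p ((j - 1) * n + r) = (p j - 1) * n + (n + 1 - r)"
    using offset_in_range[OF assms(1,3,4)] blk_offset[OF assms(1) _ assms(4), of j] assms(3,4)
    by (auto simp: block_lift_def)
  have "n + 1 - r \<in> {1..n}" using assms(4) by auto
  then show "(p j - 1) * n + (n + 1 - r) \<in> {1..n * k}" "blk n ((p j - 1) * n + (n + 1 - r)) = p j"
    using offset_in_range[OF assms(1) pj] blk_offset[OF assms(1)] pj by auto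
qed

lemma block_lift_involution:
  assumes n_pos: "n \<ge> 1" and pp: "pair_partition k p" and i: "i \<in> {1..n * k}"
  shows "block_lift n k p i \<in> {1..n * k}" "blk n (block_lift n k p i) = p (blk n i)"
    "block_lift n k p (block_lift n k p i) = i"
proof -
  let ?\<sigma> = "block_lift n k p"
  define j r where "j = blk n i" and "r = i - (j - 1) * n"
  have jr: "j \<in> {1..k}" "r \<in> {1..n}" "i = (j - 1) * n + r"
    using blk_in_range[OF n_pos i] blk_offset_decomp[OF n_pos, of i] i by (simp_all add: j_def r_def)
  have pj: "p j \<in> {1..k}" "p (p j) = j" using pair_partition_in_range[OF pp jr(1)] by auto
  have r': "n + 1 - r \<in> {1..n}" "n + 1 - (n + 1 - r) = r" using jr(2) by auto
  note image = block_lift_offset[OF n_pos pp jr(1,2)]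
  have "?\<sigma> (?\<sigma> i) = (p (p j) - 1) * n + (n + 1 - (n + 1 - r))"
    unfolding jr(3) image(1) by (rule block_lift_offset(1)[OF n_pos pp pj(1) r'(1)])
  then show "?\<sigma> (?\<sigma> i) = i" using pj(2) r'(2) jr(3) by simp
  have "blk n i = j" by (simp add: j_def)
  then show "?\<sigma> i \<in> {1..n * k}" "blk n (?\<sigma> i) = p (blk n i)"
    using image(1)[folded jr(3)] image(2,3) by simp_all
qed

lemma block_lift_in_PiNK:
  assumes n_pos: "n \<ge> 1" and pp: "pair_partition k p"
  shows "block_lift n k p \<in> PiNK n k"
proof -
  let ?\<sigma> = "block_lift n k p"
  note lift = block_lift_involution[OF n_pos pp]
  have blk_ne: "blk n (?\<sigma> i) \<noteq> blk n i" if i: "i \<in> {1..n * k}" for i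
    using lift(2)[OF i] pair_partition_in_range[OF pp blk_in_range[OF n_pos i]] by simp
  have "pair_partition (n * k) ?\<sigma>" unfolding pair_partition_def
  proof (intro conjI ballI allI impI)
    fix i assume i: "i \<in> {1..n * k}"
    then show "?\<sigma> i \<in> {1..n * k}" "?\<sigma> (?\<sigma> i) = i" using lift by blast+
    show "?\<sigma> i \<noteq> i" using blk_ne[OF i] by metis
  next
    fix i assume "i \<notin> {1..n * k}"
    then show "?\<sigma> i = i" by (auto simp: block_lift_def)
  qed
  then have "?\<sigma> \<in> P2 n k" using blk_ne by (simp add: P2_def)
  moreover have "blk n (?\<sigma> i1) = blk n (?\<sigma> i2)"
    if "i1 \<in> {1..n * k}" "i2 \<in> {1..n * k}" "blk n i1 = blk n i2" for i1 i2
    using lift(2)[OF that(1)] lift(2)[OF that(2)] that(3) by simp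
  ultimately show ?thesis unfolding PiNK_def by blast
qed

lemma bar_pi_block_lift:
  assumes n_pos: "n \<ge> 1" and pp: "pair_partition k p" and j: "j \<in> {1..k}"
  shows "bar_pi n (block_lift n k p) j = p j"
proof -
  have "(j - 1) * n + 1 \<in> {1..n * k}" "blk n ((j - 1) * n + 1) = j" using block_start[OF n_pos j] by auto
  then show ?thesis using block_lift_involution(2)[OF n_pos pp] by (simp add: bar_pi_def)
qed

lemma block_pairing_block_lift:
  assumes "n \<ge> 1" and pp: "pair_partition k p"
  shows "block_pairing n k (block_lift n k p) = p"
proof
  fix j show "block_pairing n k (block_lift n k p) j = p j"
    using bar_pi_block_lift[OF assms, of j] pair_partition_fixes[OF pp, of j] by (simp add: block_pairing_def)
qed

lemma noncrossing_block_lift: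
  assumes n_pos: "n \<ge> 1" and p: "p \<in> nc_pair_partitions k"
  shows "noncrossing (n * k) (block_lift n k p)"
proof -
  have pp: "pair_partition k p" and nc: "noncrossing k p" using p by (auto simp: nc_pair_partitions_def)
  let ?\<sigma> = "block_lift n k p"
  note bar = bar_pi_block_lift[OF n_pos pp]
  have "noncrossing k (bar_pi n ?\<sigma>)"
  proof (rule noncrossingI)
    fix a b c d assume ord: "1 \<le> a" "a < b" "b < c" "c < d" "d \<le> k"
      and "bar_pi n ?\<sigma> a = c" "bar_pi n ?\<sigma> b = d"
    then have "p a = c" "p b = d" using bar[of a] bar[of b] by auto
    then show False by (rule noncrossingD[OF nc ord])
  qed
  moreover have "block_reversing n k ?\<sigma>" unfolding block_reversing_def
  proof (intro allI impI ballI)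
    fix j l r assume jl: "1 \<le> j \<and> j < l \<and> l \<le> k \<and> bar_pi n ?\<sigma> j = l" and r: "r \<in> {1..n}"
    have "j \<in> {1..k}" "p j = l" using jl bar[of j] by auto
    moreover have "(l - 1) * n + n = l * n" using jl pred_mult_add by auto
    ultimately show "?\<sigma> ((j - 1) * n + r) = l * n + 1 - r"
      using block_lift_offset(1)[OF n_pos pp _ r, of j] r by auto
  qed
  ultimately show ?thesis
    using noncrossing_iff_block_reversing[OF n_pos block_lift_in_PiNK[OF n_pos pp]] by blast
qed

context
  fixes n k :: nat and \<pi> :: "nat \<Rightarrow> nat"
  assumes n_pos: "n \<ge> 1" and in_PiNK: "\<pi> \<in> PiNK n k" and nc: "noncrossing (n * k) \<pi>"
begin

lemma block_pairing_in_nc: "block_pairing n k \<pi> \<in> nc_pair_partitions k"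
proof -
  have "pair_partition k (block_pairing n k \<pi>)"
    using bar_pi_pairing[OF n_pos in_PiNK] by (auto simp: pair_partition_def block_pairing_def)
  moreover have "noncrossing k (block_pairing n k \<pi>)"
  proof (rule noncrossingI)
    have bar_nc: "noncrossing k (bar_pi n \<pi>)"
      using noncrossing_iff_block_reversing[OF n_pos in_PiNK] nc by blast
    fix a b c d assume ord: "1 \<le> a" "a < b" "b < c" "c < d" "d \<le> k"
      and "block_pairing n k \<pi> a = c" "block_pairing n k \<pi> b = d"
    then have "bar_pi n \<pi> a = c" "bar_pi n \<pi> b = d" by (auto simp: block_pairing_def)
    then show False by (rule noncrossingD[OF bar_nc ord])
  qed
  ultimately show ?thesis by (simp add: nc_pair_partitions_def)
qed

lemma noncrossing_PiNK_offset:
  assumes j: "j \<in> {1..k}" and r: "r \<in> {1..n}"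
  shows "\<pi> ((j - 1) * n + r) = bar_pi n \<pi> j * n + 1 - r"
proof -
  obtain l where l: "bar_pi n \<pi> j = l" "l \<in> {1..k}" "l \<noteq> j" "bar_pi n \<pi> l = j"
    using bar_pi_pairing[OF n_pos in_PiNK j] by blast
  have rev: "block_reversing n k \<pi>" using noncrossing_iff_block_reversing[OF n_pos in_PiNK] nc by blast
  consider "j < l" | "l < j" using l(3) by linarith
  then show ?thesis
  proof cases
    case 1
    then show ?thesis using block_reversingD[OF rev _ 1 _ l(1) r] j l(1,2) by simp
  next
    case 2
    have "n + 1 - r \<in> {1..n}" using r by auto
    then have "\<pi> ((l - 1) * n + (n + 1 - r)) = j * n + 1 - (n + 1 - r)"
      using block_reversingD[OF rev _ 2 _ l(4)] l(2) j by simp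
    also have "j * n + 1 - (n + 1 - r) = (j - 1) * n + r" using pred_mult_add[of j n] j r by simp
    finally have "\<pi> ((j - 1) * n + r) = \<pi> (\<pi> ((l - 1) * n + (n + 1 - r)))" by simp
    also have "\<dots> = (l - 1) * n + (n + 1 - r)" by (rule PiNK_involution[OF n_pos in_PiNK])
    also have "\<dots> = l * n + 1 - r" using pred_mult_add[of l n] l(2) r by simp
    finally show ?thesis using l(1) by simp
  qed
qed

lemma block_lift_block_pairing: "block_lift n k (block_pairing n k \<pi>) = \<pi>"
proof
  fix i
  show "block_lift n k (block_pairing n k \<pi>) i = \<pi> i"
  proof (cases "i \<in> {1..n * k}")
    case True
    obtain j r where jr: "blk n i = j" "r = i - (j - 1) * n" by blast
    then have j: "j \<in> {1..k}" and r: "r \<in> {1..n}" and i: "i = (j - 1) * n + r"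
      using blk_in_range[OF n_pos True] blk_offset_decomp[OF n_pos, of i] True by simp_all
    have "block_lift n k (block_pairing n k \<pi>) i = (bar_pi n \<pi> j + j - 1) * n + 1 - i"
      using True j jr(1) by (simp add: block_lift_def block_pairing_def)
    also have "bar_pi n \<pi> j + j - 1 = bar_pi n \<pi> j + (j - 1)" using j by simp
    also have "(bar_pi n \<pi> j + (j - 1)) * n + 1 - i = bar_pi n \<pi> j * n + 1 - r"
      unfolding add_mult_distrib i by simp
    also have "\<dots> = \<pi> i" using noncrossing_PiNK_offset[OF j r] i by simp
    finally show ?thesis .
  next
    case False
    then show ?thesis using PiNK_fixes[OF n_pos in_PiNK] by (auto simp: block_lift_def)
  qed
qed

end

lemma card_noncrossing_PiNK:
  assumes "n \<ge> 1" "even k"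
  shows "real (card {\<pi> \<in> PiNK n k. noncrossing (n * k) \<pi>}) = catalan (k div 2)"
proof -
  have "bij_betw (block_pairing n k) {\<pi> \<in> PiNK n k. noncrossing (n * k) \<pi>} (nc_pair_partitions k)"
  proof (rule bij_betw_byWitness[where f'="block_lift n k"])
    show "\<forall>\<pi>\<in>{\<pi> \<in> PiNK n k. noncrossing (n * k) \<pi>}. block_lift n k (block_pairing n k \<pi>) = \<pi>"
      using block_lift_block_pairing[OF assms(1)] by blast
    show "\<forall>p\<in>nc_pair_partitions k. block_pairing n k (block_lift n k p) = p"
      using block_pairing_block_lift[OF assms(1)] by (auto simp: nc_pair_partitions_def)
    show "block_pairing n k ` {\<pi> \<in> PiNK n k. noncrossing (n * k) \<pi>} \<subseteq> nc_pair_partitions k"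
      using block_pairing_in_nc[OF assms(1)] by blast
    show "block_lift n k ` nc_pair_partitions k \<subseteq> {\<pi> \<in> PiNK n k. noncrossing (n * k) \<pi>}"
      using block_lift_in_PiNK[OF assms(1)] noncrossing_block_lift[OF assms(1)]
      by (auto simp: nc_pair_partitions_def)
  qed
  then have "card {\<pi> \<in> PiNK n k. noncrossing (n * k) \<pi>} = card (nc_pair_partitions (2 * (k div 2)))"
    using assms(2) by (simp add: bij_betw_same_card)
  then show ?thesis using card_nc_pair_partitions by simp
qed

lemma finite_PiNK: "finite (PiNK n k)"
  by (rule finite_subset[OF _ finite_pair_partitions[of "n * k"]]) (auto simp: PiNK_def P2_def)

lemma tendsto_powr_neg_exponent:
  assumes "e \<ge> (0::real)"
  shows "((\<lambda>N::nat. real N powr (- e)) \<longlongrightarrow> (if e = 0 then 1 else 0)) sequentially"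
proof (cases "e = 0")
  case True
  have "eventually (\<lambda>N::nat. real N powr (- e) = 1) sequentially"
    using eventually_gt_at_top[of "0::nat"] by eventually_elim (use True in auto)
  then show ?thesis using True by (simp add: tendsto_eventually)
next
  case False
  then have "((\<lambda>N::nat. real N powr (- e)) \<longlongrightarrow> 0) sequentially"
    using assms by (intro tendsto_neg_powr filterlim_real_sequentially) auto
  then show ?thesis using False by simp
qed

theorem K_tendsto_catalan:
  assumes n_pos: "n \<ge> 1" and "even k"
  shows "(\<lambda>N::nat. K k n (real N)) \<longlonglongrightarrow> catalan (k div 2)"
proof -
  define e where "e \<pi> = real (n * k) / 2 - real (cyc0 (n * k) (\<pi> \<circ> alpha (n * k)))" for \<pi>
  have bound: "2 * cyc0 (n * k) (\<pi> \<circ> alpha (n * k)) \<le> n * k \<and>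
      (2 * cyc0 (n * k) (\<pi> \<circ> alpha (n * k)) = n * k \<longleftrightarrow> noncrossing (n * k) \<pi>)"
    if "\<pi> \<in> PiNK n k" for \<pi>
    using pair_partition_cycle_bound[OF PiNK_pair_partition[OF n_pos that]] .
  have "e \<pi> \<ge> 0" if "\<pi> \<in> PiNK n k" for \<pi> using bound[OF that] unfolding e_def by linarith
  then have "((\<lambda>N::nat. \<Sum>\<pi>\<in>PiNK n k. real N powr (- e \<pi>)) \<longlongrightarrow>
      (\<Sum>\<pi>\<in>PiNK n k. if e \<pi> = 0 then 1 else 0)) sequentially"
    by (intro tendsto_sum tendsto_powr_neg_exponent)
  moreover have "(\<Sum>\<pi>\<in>PiNK n k. if e \<pi> = 0 then 1 else 0) =
      (\<Sum>\<pi>\<in>PiNK n k. if noncrossing (n * k) \<pi> then 1 else (0::real))"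
  proof (rule sum.cong)
    fix \<pi> assume "\<pi> \<in> PiNK n k"
    have "e \<pi> = 0 \<longleftrightarrow> 2 * cyc0 (n * k) (\<pi> \<circ> alpha (n * k)) = n * k" unfolding e_def by linarith
    then show "(if e \<pi> = 0 then 1 else 0) = (if noncrossing (n * k) \<pi> then 1 else (0::real))"
      using bound[OF \<open>\<pi> \<in> PiNK n k\<close>] by simp
  qed simp
  moreover have "\<dots> = real (card {\<pi> \<in> PiNK n k. noncrossing (n * k) \<pi>})"
    using finite_PiNK by (simp add: sum.If_cases Int_def)
  ultimately show ?thesis
    using card_noncrossing_PiNK[OF assms] by (simp add: K_def e_def)
qed

theorem mainTheorem11:
  fixes n k :: nat
  assumes "n \<ge> 1" and "k \<ge> 2" and "even k"
  shows "(\<forall>\<pi>\<in>PiNK n k.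
            2 * cyc0 (n*k) (\<pi> \<circ> alpha (n*k)) \<le> n*k \<and>
            (2 * cyc0 (n*k) (\<pi> \<circ> alpha (n*k)) = n*k \<longleftrightarrow>
               noncrossing k (bar_pi n \<pi>) \<and>
               (\<forall>j l. 1 \<le> j \<and> j < l \<and> l \<le> k \<and> bar_pi n \<pi> j = l \<longrightarrow>
                  (\<forall>r\<in>{1..n}. \<pi> ((j - 1) * n + r) = l * n + 1 - r))))
         \<and> ((\<lambda>N::nat. K k n (real N)) \<longlonglongrightarrow> catalan (k div 2))"
proof -
  have "2 * cyc0 (n*k) (\<pi> \<circ> alpha (n*k)) \<le> n*k \<and>
      (2 * cyc0 (n*k) (\<pi> \<circ> alpha (n*k)) = n*k \<longleftrightarrow>
         noncrossing k (bar_pi n \<pi>) \<and> block_reversing n k \<pi>)" if "\<pi> \<in> PiNK n k" for \<pi>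
    using pair_partition_cycle_bound[OF PiNK_pair_partition[OF assms(1) that]]
      noncrossing_iff_block_reversing[OF assms(1) that] by simp
  then show ?thesis using K_tendsto_catalan[OF assms(1,3)] unfolding block_reversing_def by blast
qed

end
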